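(* Let $X_3=FVP_3\cap FVK_3$. Then $$X_3\cong \mathbb Z^2 * \mathbb F_3 * \Gamma,$$ where $\mathbb F_3$ is a free group of rank $3$ and $\Gamma=\langle x,y,u,v,p,q\mid xy=uv,\ vu=pq,\ qp=yx\rangle$.
   Context: For $n\ge 2$, the flat virtual braid group $FVB_n$ is the group with generators $\sigma_1,\dots,\sigma_{n-1},\rho_1,\dots,\rho_{n-1}$ and defining relations: $\sigma_i^2=1$, $\rho_i^2=1$ for $1\le i\le n-1$; $\sigma_i\sigma_{i+1}\sigma_i=\sigma_{i+1}\sigma_i\sigma_{i+1}$, $\rho_i\rho_{i+1}\rho_i=\rho_{i+1}\rho_i\rho_{i+1}$ and $\rho_i\rho_{i+1}\sigma_i=\sigma_{i+1}\rho_i\rho_{i+1}$ for $1\le i\le n-2$; $\sigma_i\sigma_j=\sigma_j\sigma_i$, $\rho_i\rho_j=\rho_j\rho_i$ and $\rho_i\sigma_j=\sigma_j\rho_i$ for $|i-j|\ge 2$. Let $S_n=\langle\sigma_1,\dots,\sigma_{n-1}\rangle$ and $S_n'=\langle\rho_1,\dots,\rho_{n-1}\rangle$ in $FVB_n$. $\pi_n\colon FVB_n\to S_n$ is the homomorphism with $\pi_n(\sigma_i)=\pi_n(\rho_i)=\sigma_i$, and $FVP_n=\operatorname{Ker}\pi_n$. $\nu_n\colon FVB_n\to S_n'$ is the homomorphism with $\nu_n(\sigma_i)=1$, $\nu_n(\rho_i)=\rho_i$, and $FVK_n=\operatorname{Ker}\nu_n$. *)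

theory Defs
  imports "HOL-Algebra.Algebra"
begin

text \<open>A word over an alphabet of generators: a list of letters (g, True) = g, (g, False) = g^-1.\<close>
type_synonym 'g word = "('g \<times> bool) list"

definition words :: "'g set \<Rightarrow> 'g word set" where
  "words A = {w. fst ` set w \<subseteq> A}"

definition gen :: "'g \<Rightarrow> 'g word" where
  "gen g = [(g, True)]"

definition winv :: "'g word \<Rightarrow> 'g word" where
  "winv w = rev (map (\<lambda>(g, b). (g, \<not> b)) w)"

definition relation :: "'g word \<Rightarrow> 'g word \<Rightarrow> 'g word" where
  "relation l r = l @ winv r"

inductive pres_eq :: "'g set \<Rightarrow> 'g word set \<Rightarrow> 'g word \<Rightarrow> 'g word \<Rightarrow> bool"
  for A :: "'g set" and R :: "'g word set" where
  refl: "w \<in> words A \<Longrightarrow> pres_eq A R w w"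
| sym: "pres_eq A R u v \<Longrightarrow> pres_eq A R v u"
| trans: "pres_eq A R u v \<Longrightarrow> pres_eq A R v w \<Longrightarrow> pres_eq A R u w"
| cancel: "u \<in> words A \<Longrightarrow> v \<in> words A \<Longrightarrow> g \<in> A \<Longrightarrow>
           pres_eq A R (u @ [(g, b), (g, \<not> b)] @ v) (u @ v)"
| relator: "u \<in> words A \<Longrightarrow> v \<in> words A \<Longrightarrow> r \<in> R \<Longrightarrow> r \<in> words A \<Longrightarrow>
           pres_eq A R (u @ r @ v) (u @ v)"

definition pres_rel :: "'g set \<Rightarrow> 'g word set \<Rightarrow> ('g word \<times> 'g word) set" where
  "pres_rel A R = {(u, v). pres_eq A R u v}"

definition pres_class :: "'g set \<Rightarrow> 'g word set \<Rightarrow> 'g word \<Rightarrow> 'g word set" where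
  "pres_class A R w = pres_rel A R `` {w}"

definition presented_group :: "'g set \<Rightarrow> 'g word set \<Rightarrow> 'g word set monoid" where
  "presented_group A R =
     \<lparr> carrier = words A // pres_rel A R,
       monoid.mult = (\<lambda>S T. pres_class A R ((SOME s. s \<in> S) @ (SOME t. t \<in> T))),
       one = pres_class A R [] \<rparr>"

definition eval_word :: "('b, 'm) monoid_scheme \<Rightarrow> ('g \<Rightarrow> 'b) \<Rightarrow> 'g word \<Rightarrow> 'b" where
  "eval_word H f w =
     foldr (\<lambda>(g, b) acc. monoid.mult H (if b then f g else m_inv H (f g)) acc) w (monoid.one H)"

text \<open>The homomorphism < A | R > \<rightarrow> H determined by the images f of the generators
  (well defined whenever f respects the relators).\<close>
definition pres_lift :: "('b, 'm) monoid_scheme \<Rightarrow> ('g \<Rightarrow> 'b) \<Rightarrow> 'g word set \<Rightarrow> 'b" where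
  "pres_lift H f C = eval_word H f (SOME w. w \<in> C)"

datatype fvb_gen = Sig nat | Rho nat

definition fvb_gens :: "nat \<Rightarrow> fvb_gen set" where
  "fvb_gens n = {Sig i | i. 1 \<le> i \<and> i \<le> n - 1} \<union> {Rho i | i. 1 \<le> i \<and> i \<le> n - 1}"

definition fvb_rels :: "nat \<Rightarrow> fvb_gen word set" where
  "fvb_rels n =
     {relation (gen (Sig i) @ gen (Sig i)) [] | i. 1 \<le> i \<and> i \<le> n - 1}
   \<union> {relation (gen (Rho i) @ gen (Rho i)) [] | i. 1 \<le> i \<and> i \<le> n - 1}
   \<union> {relation (gen (Sig i) @ gen (Sig (i+1)) @ gen (Sig i))
               (gen (Sig (i+1)) @ gen (Sig i) @ gen (Sig (i+1))) | i. 1 \<le> i \<and> i \<le> n - 2}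
   \<union> {relation (gen (Rho i) @ gen (Rho (i+1)) @ gen (Rho i))
               (gen (Rho (i+1)) @ gen (Rho i) @ gen (Rho (i+1))) | i. 1 \<le> i \<and> i \<le> n - 2}
   \<union> {relation (gen (Rho i) @ gen (Rho (i+1)) @ gen (Sig i))
               (gen (Sig (i+1)) @ gen (Rho i) @ gen (Rho (i+1))) | i. 1 \<le> i \<and> i \<le> n - 2}
   \<union> {relation (gen (Sig i) @ gen (Sig j)) (gen (Sig j) @ gen (Sig i)) | i j.
        1 \<le> i \<and> i \<le> n - 1 \<and> 1 \<le> j \<and> j \<le> n - 1 \<and> (i + 2 \<le> j \<or> j + 2 \<le> i)}
   \<union> {relation (gen (Rho i) @ gen (Rho j)) (gen (Rho j) @ gen (Rho i)) | i j.
        1 \<le> i \<and> i \<le> n - 1 \<and> 1 \<le> j \<and> j \<le> n - 1 \<and> (i + 2 \<le> j \<or> j + 2 \<le> i)}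
   \<union> {relation (gen (Rho i) @ gen (Sig j)) (gen (Sig j) @ gen (Rho i)) | i j.
        1 \<le> i \<and> i \<le> n - 1 \<and> 1 \<le> j \<and> j \<le> n - 1 \<and> (i + 2 \<le> j \<or> j + 2 \<le> i)}"

definition FVB :: "nat \<Rightarrow> fvb_gen word set monoid" where
  "FVB n = presented_group (fvb_gens n) (fvb_rels n)"

text \<open>pi_n : FVB_n \<rightarrow> S_n = <sigma_i> \<subseteq> FVB_n, sigma_i, rho_i \<mapsto> sigma_i.\<close>
definition fvb_pi :: "nat \<Rightarrow> fvb_gen word set \<Rightarrow> fvb_gen word set" where
  "fvb_pi n = pres_lift (FVB n)
     (\<lambda>g. case g of Sig i \<Rightarrow> pres_class (fvb_gens n) (fvb_rels n) (gen (Sig i))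
                  | Rho i \<Rightarrow> pres_class (fvb_gens n) (fvb_rels n) (gen (Sig i)))"

text \<open>nu_n : FVB_n \<rightarrow> S_n' = <rho_i> \<subseteq> FVB_n, sigma_i \<mapsto> 1, rho_i \<mapsto> rho_i.\<close>
definition fvb_nu :: "nat \<Rightarrow> fvb_gen word set \<Rightarrow> fvb_gen word set" where
  "fvb_nu n = pres_lift (FVB n)
     (\<lambda>g. case g of Sig i \<Rightarrow> monoid.one (FVB n)
                  | Rho i \<Rightarrow> pres_class (fvb_gens n) (fvb_rels n) (gen (Rho i)))"

definition FVP :: "nat \<Rightarrow> fvb_gen word set set" where
  "FVP n = kernel (FVB n) (FVB n) (fvb_pi n)"

definition FVK :: "nat \<Rightarrow> fvb_gen word set set" where
  "FVK n = kernel (FVB n) (FVB n) (fvb_nu n)"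

text \<open>Generators: a, b for Z^2; f 0, f 1, f 2 for F_3; x, y, u, v, p, q for Gamma.
  The free product of presented groups is presented by the disjoint union of the
  generators and of the relators.\<close>
datatype tgt_gen = Ta | Tb | Tf nat | Tx | Ty | Tu | Tv | Tp | Tq

definition tgt_gens :: "tgt_gen set" where
  "tgt_gens = {Ta, Tb, Tf 0, Tf 1, Tf 2, Tx, Ty, Tu, Tv, Tp, Tq}"

definition tgt_rels :: "tgt_gen word set" where
  "tgt_rels =
    {relation (gen Ta @ gen Tb) (gen Tb @ gen Ta),
     relation (gen Tx @ gen Ty) (gen Tu @ gen Tv),
     relation (gen Tv @ gen Tu) (gen Tp @ gen Tq),
     relation (gen Tq @ gen Tp) (gen Ty @ gen Tx)}"

definition Z2_F3_Gamma :: "tgt_gen word set monoid" where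
  "Z2_F3_Gamma = presented_group tgt_gens tgt_rels"

end

theory Submission
  imports Defs
begin

text \<open>The homomorphism FVB 3 \<rightarrow> S3 \<times> S3 with Sig i \<mapsto> (s_i, 1) and Rho i \<mapsto> (s_i, s_i) is
  onto, and since pi and nu restrict to isomorphisms on the two copies of S3 in FVB 3, its kernel
  is X3 = FVP 3 \<inter> FVK 3. So X3 has index 36, and the Reidemeister-Schreier method presents it
  with 144 Schreier generators and 252 rewritten relators. Tietze transformations turn this
  presentation into the one of Z2 * F3 * Gamma: 35 Schreier generators are trivial for a Schreier
  transversal, 100 are eliminated one after the other, each by a rewritten relator in which it
  occurs once, and the remaining 9 are matched with the 11 target generators by substitutions
  that are inverse to each other modulo the relators. Every identity used is witnessed by an
  explicit product of conjugates of relators which agrees with it after free reduction, and all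
  these certificates are checked by the simplifier.\<close>

lemma words_Nil[simp]: "[] \<in> words A" by (simp add: words_def)
lemma words_Cons[simp]: "(x # v \<in> words A) = (fst x \<in> A \<and> v \<in> words A)"
  by (auto simp: words_def)
lemma words_append[simp]: "(u @ v \<in> words A) = (u \<in> words A \<and> v \<in> words A)"
  by (auto simp: words_def)
lemma winv_Nil[simp]: "winv [] = []" by (simp add: winv_def)
lemma winv_Cons[simp]: "winv (x # u) = winv u @ [(fst x, \<not> snd x)]"
  by (cases x) (simp add: winv_def)
lemma winv_append[simp]: "winv (u @ v) = winv v @ winv u"
  by (simp add: winv_def)
lemma winv_winv[simp]: "winv (winv u) = u"
  by (induction u) auto
lemma winv_words[simp]: "(winv u \<in> words A) = (u \<in> words A)"
  by (induction u) auto
lemma gen_words[simp]: "(gen g \<in> words A) = (g \<in> A)" by (simp add: gen_def)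

lemma pres_eq_words: "pres_eq A R u v \<Longrightarrow> u \<in> words A \<and> v \<in> words A"
  by (induction rule: pres_eq.induct) auto

lemma pres_eq_left: "pres_eq A R u v \<Longrightarrow> w \<in> words A \<Longrightarrow> pres_eq A R (w @ u) (w @ v)"
proof (induction rule: pres_eq.induct)
  case (refl w') then show ?case by (simp add: pres_eq.refl)
next
  case (sym u v) then show ?case by (blast intro: pres_eq.sym)
next
  case (trans u v w') then show ?case by (blast intro: pres_eq.trans)
next
  case (cancel u v g b)
  then show ?case using pres_eq.cancel[of "w @ u" A v g R b] by simp
next
  case (relator u v r)
  then show ?case using pres_eq.relator[of "w @ u" A v r R] by simp
qed

lemma pres_eq_right: "pres_eq A R u v \<Longrightarrow> w \<in> words A \<Longrightarrow> pres_eq A R (u @ w) (v @ w)"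
proof (induction rule: pres_eq.induct)
  case (refl w') then show ?case by (simp add: pres_eq.refl)
next
  case (sym u v) then show ?case by (blast intro: pres_eq.sym)
next
  case (trans u v w') then show ?case by (blast intro: pres_eq.trans)
next
  case (cancel u v g b)
  then show ?case using pres_eq.cancel[of u A "v @ w" g R b] by simp
next
  case (relator u v r)
  then show ?case using pres_eq.relator[of u A "v @ w" r R] by simp
qed

lemma pres_eq_app: "pres_eq A R u u' \<Longrightarrow> pres_eq A R v v' \<Longrightarrow> pres_eq A R (u @ v) (u' @ v')"
  by (meson pres_eq.trans pres_eq_left pres_eq_right pres_eq_words)

lemma pres_eq_cancel_word: "u \<in> words A \<Longrightarrow> pres_eq A R (u @ winv u) []"
proof (induction u)
  case Nil then show ?case by (simp add: pres_eq.refl)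
next
  case (Cons x u)
  obtain g b where x: "x = (g, b)" by fastforce
  have gA: "g \<in> A" using Cons x by simp
  have "pres_eq A R ([x] @ (u @ winv u) @ [(g, \<not> b)]) ([x] @ [] @ [(g, \<not> b)])"
    by (rule pres_eq_left[OF pres_eq_right]) (use Cons x gA in auto)
  moreover have "pres_eq A R ([] @ [(g, b), (g, \<not> b)] @ []) ([] @ [])"
    by (rule pres_eq.cancel) (use gA in auto)
  ultimately show ?case using x by (auto intro: pres_eq.trans)
qed

lemma pres_eq_winv_cancel_word: "u \<in> words A \<Longrightarrow> pres_eq A R (winv u @ u) []"
  using pres_eq_cancel_word[of "winv u" A R] by simp

lemma pres_eq_relator_trivial: "r \<in> R \<Longrightarrow> r \<in> words A \<Longrightarrow> pres_eq A R r []"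
  using pres_eq.relator[of "[]" A "[]" r R] by simp

lemma pres_eq_delete_trivial: "pres_eq A R m [] \<Longrightarrow> x \<in> words A \<Longrightarrow> z \<in> words A \<Longrightarrow>
  pres_eq A R (x @ m @ z) (x @ z)"
  using pres_eq_left[OF pres_eq_right[of A R m "[]" z] , of x] by simp

lemma pres_eq_of_trivial_quotient:
  assumes "pres_eq A R (u @ winv v) []" "u \<in> words A" "v \<in> words A"
  shows "pres_eq A R u v"
proof -
  have 1: "pres_eq A R (u @ winv v @ v) ([] @ v)"
    using pres_eq_right[OF assms(1), of v] assms by simp
  have 2: "pres_eq A R (u @ winv v @ v) (u @ [])"
    using pres_eq_delete_trivial[OF pres_eq_winv_cancel_word[OF assms(3)], of u "[]"] assms by simp
  show ?thesis using 1 2 by (auto intro: pres_eq.sym pres_eq.trans)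
qed

section \<open>The presented group\<close>

lemma equiv_pres_rel: "equiv (words A) (pres_rel A R)"
  unfolding equiv_def refl_on_def sym_def trans_def pres_rel_def
  by (auto intro: pres_eq.refl pres_eq.sym pres_eq.trans dest: pres_eq_words)

lemma pres_class_eq_iff: "u \<in> words A \<Longrightarrow> v \<in> words A \<Longrightarrow>
    (pres_class A R u = pres_class A R v) = pres_eq A R u v"
  unfolding pres_class_def
  using eq_equiv_class_iff[OF equiv_pres_rel, of u A v R] by (simp add: pres_rel_def)

lemma in_pres_class: "w \<in> pres_class A R u \<longleftrightarrow> pres_eq A R u w"
  by (simp add: pres_class_def pres_rel_def)

lemma carrier_presented_group: "carrier (presented_group A R) = pres_class A R ` words A"
  by (auto simp: presented_group_def quotient_def pres_class_def)

lemma one_presented_group: "\<one>\<^bsub>presented_group A R\<^esub> = pres_class A R []"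
  by (simp add: presented_group_def)

lemma pres_eq_some_in_class: "u \<in> words A \<Longrightarrow> pres_eq A R u (SOME s. s \<in> pres_class A R u)"
proof -
  assume u: "u \<in> words A"
  have "u \<in> pres_class A R u" using u by (simp add: in_pres_class pres_eq.refl)
  then have "(SOME s. s \<in> pres_class A R u) \<in> pres_class A R u" by (rule someI)
  then show ?thesis by (simp add: in_pres_class)
qed

lemma mult_presented_group: "u \<in> words A \<Longrightarrow> v \<in> words A \<Longrightarrow>
  pres_class A R u \<otimes>\<^bsub>presented_group A R\<^esub> pres_class A R v = pres_class A R (u @ v)"
proof -
  assume u: "u \<in> words A" and v: "v \<in> words A"
  have pe: "pres_eq A R (u @ v) ((SOME s. s \<in> pres_class A R u) @ (SOME s. s \<in> pres_class A R v))"
    by (rule pres_eq_app) (use pres_eq_some_in_class u v in auto)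
  have "pres_class A R ((SOME s. s \<in> pres_class A R u) @ (SOME s. s \<in> pres_class A R v))
      = pres_class A R (u @ v)"
    using pe pres_eq_words[OF pe] by (subst pres_class_eq_iff) (auto intro: pres_eq.sym)
  then show ?thesis by (simp add: presented_group_def)
qed

lemma group_presented_group: "group (presented_group A R)"
proof (rule groupI)
  fix x y assume "x \<in> carrier (presented_group A R)" "y \<in> carrier (presented_group A R)"
  then show "x \<otimes>\<^bsub>presented_group A R\<^esub> y \<in> carrier (presented_group A R)"
    by (auto simp: carrier_presented_group mult_presented_group)
next
  show "\<one>\<^bsub>presented_group A R\<^esub> \<in> carrier (presented_group A R)"
    by (auto simp: carrier_presented_group one_presented_group)
next
  fix x y z assume "x \<in> carrier (presented_group A R)" "y \<in> carrier (presented_group A R)"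
    "z \<in> carrier (presented_group A R)"
  then show "x \<otimes>\<^bsub>presented_group A R\<^esub> y \<otimes>\<^bsub>presented_group A R\<^esub> z =
     x \<otimes>\<^bsub>presented_group A R\<^esub> (y \<otimes>\<^bsub>presented_group A R\<^esub> z)"
    by (auto simp: carrier_presented_group mult_presented_group)
next
  fix x assume "x \<in> carrier (presented_group A R)"
  then show "\<one>\<^bsub>presented_group A R\<^esub> \<otimes>\<^bsub>presented_group A R\<^esub> x = x"
    by (auto simp: carrier_presented_group mult_presented_group one_presented_group)
next
  fix x assume "x \<in> carrier (presented_group A R)"
  then obtain u where u: "u \<in> words A" "x = pres_class A R u" by (auto simp: carrier_presented_group)
  have "pres_class A R (winv u) \<otimes>\<^bsub>presented_group A R\<^esub> x = pres_class A R []"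
    using u by (simp add: mult_presented_group pres_class_eq_iff pres_eq_winv_cancel_word)
  then show "\<exists>y\<in>carrier (presented_group A R). y \<otimes>\<^bsub>presented_group A R\<^esub> x = \<one>\<^bsub>presented_group A R\<^esub>"
    using u by (auto simp: carrier_presented_group one_presented_group)
qed

lemma pres_class_in_carrier: "w \<in> words A \<Longrightarrow> pres_class A R w \<in> carrier (presented_group A R)"
  by (simp add: carrier_presented_group)

lemma inv_presented_group: "u \<in> words A \<Longrightarrow>
    inv\<^bsub>presented_group A R\<^esub> (pres_class A R u) = pres_class A R (winv u)"
  by (rule group.inv_equality[OF group_presented_group])
     (auto simp: mult_presented_group one_presented_group pres_class_in_carrier pres_class_eq_iff pres_eq_winv_cancel_word)

definition letters_in :: "('b,'m) monoid_scheme \<Rightarrow> ('g \<Rightarrow> 'b) \<Rightarrow> 'g word \<Rightarrow> bool" where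
  "letters_in H f w = (\<forall>x\<in>set w. f (fst x) \<in> carrier H)"

lemma letters_in_simps[simp]:
  "letters_in H f []"
  "letters_in H f (x # w) = (f (fst x) \<in> carrier H \<and> letters_in H f w)"
  "letters_in H f (u @ w) = (letters_in H f u \<and> letters_in H f w)"
  "letters_in H f (winv w) = letters_in H f w"
  by (auto simp: letters_in_def winv_def)

lemma eval_word_Nil[simp]: "eval_word H f [] = \<one>\<^bsub>H\<^esub>" by (simp add: eval_word_def)
lemma eval_word_Cons: "eval_word H f ((g, b) # w) =
  (if b then f g else inv\<^bsub>H\<^esub> (f g)) \<otimes>\<^bsub>H\<^esub> eval_word H f w"
  by (simp add: eval_word_def)

context group begin

lemma eval_word_closed[simp]: "letters_in G f w \<Longrightarrow> eval_word G f w \<in> carrier G"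
  by (induction w) (auto simp: eval_word_Cons)

lemma eval_word_append: "letters_in G f u \<Longrightarrow> letters_in G f v \<Longrightarrow>
  eval_word G f (u @ v) = eval_word G f u \<otimes> eval_word G f v"
  by (induction u) (auto simp: eval_word_Cons m_assoc)

lemma eval_word_winv: "letters_in G f u \<Longrightarrow> eval_word G f (winv u) = inv (eval_word G f u)"
proof (induction u)
  case Nil then show ?case by simp
next
  case (Cons x u)
  obtain g b where x: "x = (g, b)" by fastforce
  show ?case using Cons x
    by (auto simp: eval_word_append eval_word_Cons inv_mult_group)
qed

end

lemma eval_word_cong: "(\<And>x. x \<in> set w \<Longrightarrow> f (fst x) = f' (fst x)) \<Longrightarrow> eval_word H f w = eval_word H f' w"
proof (induction w)
  case (Cons y w)
  obtain g b where y: "y = (g, b)" by fastforce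
  have "f g = f' g" using Cons.prems[of "(g, b)"] y by simp
  then show ?case using Cons y by (simp add: eval_word_Cons)
qed (simp add: eval_word_def)

lemma (in group) eval_word_in_subgroup:
  assumes "subgroup H G" "\<forall>x\<in>set w. f (fst x) \<in> H"
  shows "eval_word G f w \<in> H"
  using assms(2)
proof (induction w)
  case Nil then show ?case using assms(1) by (simp add: subgroup.one_closed)
next
  case (Cons y w)
  obtain g b where y: "y = (g, b)" by fastforce
  then show ?case using Cons assms(1)
    by (auto simp: eval_word_Cons subgroup.m_closed subgroup.m_inv_closed)
qed

fun free_step :: "'g word \<Rightarrow> ('g \<times> bool) \<Rightarrow> 'g word" where
  "free_step [] x = [x]"
| "free_step (y # ys) x = (if fst y = fst x \<and> snd y = (\<not> snd x) then ys else x # y # ys)"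

definition free_reduce :: "'g word \<Rightarrow> 'g word" where
  "free_reduce w = rev (foldl free_step [] w)"

lemma set_free_step: "set (free_step acc x) \<subseteq> insert x (set acc)"
  by (cases acc) auto

lemma (in group) eval_word_cancel_pair: "f g \<in> carrier G \<Longrightarrow> letters_in G f w \<Longrightarrow>
  eval_word G f ((g, b) # (g, \<not> b) # w) = eval_word G f w"
  by (cases b) (simp_all add: eval_word_Cons m_assoc[symmetric])

lemma (in group) eval_word_free_step: "letters_in G f acc \<Longrightarrow> letters_in G f [x] \<Longrightarrow> letters_in G f w \<Longrightarrow>
  eval_word G f (rev (free_step acc x) @ w) = eval_word G f (rev acc @ x # w)"
proof (cases acc)
  case Nil then show ?thesis by simp
next
  case (Cons y ys)
  assume ok: "letters_in G f acc" "letters_in G f [x]" "letters_in G f w"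
  obtain g b where x: "x = (g,b)" by fastforce
  obtain h c where y: "y = (h,c)" by fastforce
  show ?thesis
  proof (cases "h = g \<and> c = (\<not> b)")
    case True
    have fg: "f g \<in> carrier G" using ok x by simp
    have okys: "letters_in G f (rev ys)" using ok Cons by (simp add: letters_in_def)
    have "eval_word G f ([y] @ [x] @ w) = eval_word G f w"
      using ok True x y fg eval_word_cancel_pair[of f h w c] by auto
    then have "eval_word G f (rev ys @ ([y] @ [x] @ w)) = eval_word G f (rev ys @ w)"
      using ok okys x y fg True by (simp add: eval_word_append)
    then show ?thesis using Cons True x y by simp
  next
    case False
    have "free_step acc x = x # y # ys" using Cons x y False by auto
    then show ?thesis using Cons by simp
  qed
qed

lemma (in group) eval_word_foldl_free_step: "letters_in G f acc \<Longrightarrow> letters_in G f w \<Longrightarrow>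
  eval_word G f (rev (foldl free_step acc w)) = eval_word G f (rev acc @ w)"
proof (induction w arbitrary: acc)
  case Nil then show ?case by simp
next
  case (Cons x w)
  have ok: "letters_in G f (free_step acc x)"
    using set_free_step[of acc x] Cons.prems by (auto simp: letters_in_def)
  have "eval_word G f (rev (foldl free_step acc (x # w))) = eval_word G f (rev (free_step acc x) @ w)"
    using Cons.IH[OF ok] Cons.prems by simp
  also have "\<dots> = eval_word G f (rev acc @ x # w)"
    using Cons.prems by (intro eval_word_free_step) auto
  finally show ?case .
qed

lemma (in group) eval_word_free_reduce: "letters_in G f w \<Longrightarrow> eval_word G f (free_reduce w) = eval_word G f w"
  unfolding free_reduce_def using eval_word_foldl_free_step[of f "[]" w] by simp

definition subst_word :: "('a \<Rightarrow> 'b word) \<Rightarrow> 'a word \<Rightarrow> 'b word" where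
  "subst_word m w = concat (map (\<lambda>(x, b). if b then m x else winv (m x)) w)"

lemma subst_word_simps[simp]: "subst_word m [] = []"
  "subst_word m ((x, b) # w) = (if b then m x else winv (m x)) @ subst_word m w"
  "subst_word m (u @ v) = subst_word m u @ subst_word m v"
  by (auto simp: subst_word_def)

lemma subst_word_winv[simp]: "subst_word m (winv w) = winv (subst_word m w)"
  by (induction w) auto

lemma subst_word_subst_word: "subst_word m1 (subst_word m2 w) = subst_word (\<lambda>x. subst_word m1 (m2 x)) w"
  by (induction w) auto

lemma (in group) eval_word_subst_word: "(\<And>x. x \<in> fst ` set w \<Longrightarrow> letters_in G f (m x)) \<Longrightarrow>
  eval_word G f (subst_word m w) = eval_word G (\<lambda>x. eval_word G f (m x)) w"
proof (induction w)
  case Nil then show ?case by simp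
next
  case (Cons y w)
  obtain x b where y: "y = (x, b)" by fastforce
  have ok: "letters_in G f (m x)" "\<And>z. z \<in> fst ` set w \<Longrightarrow> letters_in G f (m z)"
    using Cons.prems y by auto
  have okw: "letters_in G f (subst_word m w)"
    using ok(2) by (induction w) (auto split: if_splits)
  show ?case using Cons.IH[OF ok(2)] ok okw y
    by (simp add: eval_word_append eval_word_winv eval_word_Cons)
qed

lemma fst_set_subst_word: "fst ` set (subst_word m w) \<subseteq> (\<Union>y\<in>set w. fst ` set (m (fst y)))"
proof (induction w)
  case (Cons y w)
  obtain g b where y: "y = (g, b)" by fastforce
  have "fst ` set (winv (m g)) = fst ` set (m g)" by (force simp: winv_def)
  then show ?case using Cons y by auto
qed simp

section \<open>Universal property\<close>

lemma subst_word_words: "(\<And>x. x \<in> fst ` set w \<Longrightarrow> m x \<in> words A) \<Longrightarrow> subst_word m w \<in> words A"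
  by (induction w) auto

lemma eval_word_pres_class_subst: "(\<And>x. x \<in> fst ` set w \<Longrightarrow> m x \<in> words A) \<Longrightarrow>
  eval_word (presented_group A R) (\<lambda>g. pres_class A R (m g)) w = pres_class A R (subst_word m w)"
proof (induction w)
  case Nil then show ?case by (simp add: one_presented_group)
next
  case (Cons y w)
  obtain x b where y: "y = (x, b)" by fastforce
  have mx: "m x \<in> words A" using Cons.prems y by auto
  have sw: "subst_word m w \<in> words A" using Cons.prems by (intro subst_word_words) auto
  show ?case using Cons y mx sw
    by (auto simp: eval_word_Cons inv_presented_group mult_presented_group)
qed

lemma eval_word_pres_class_gen: "w \<in> words A \<Longrightarrow>
  eval_word (presented_group A R) (\<lambda>g. pres_class A R (gen g)) w = pres_class A R w"
proof -
  assume w: "w \<in> words A"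
  have "subst_word gen w = w" by (induction w) (auto simp: gen_def)
  moreover have "\<And>x. x \<in> fst ` set w \<Longrightarrow> gen x \<in> words A" using w by (auto simp: words_def gen_def)
  ultimately show ?thesis using eval_word_pres_class_subst[of w gen A R] by simp
qed

definition respects_relators :: "('b,'m) monoid_scheme \<Rightarrow> ('g \<Rightarrow> 'b) \<Rightarrow> 'g set \<Rightarrow> 'g word set \<Rightarrow> bool" where
  "respects_relators H f A R = ((\<forall>g\<in>A. f g \<in> carrier H) \<and> (\<forall>r\<in>R. r \<in> words A \<longrightarrow> eval_word H f r = \<one>\<^bsub>H\<^esub>))"

lemma letters_in_words: "(\<forall>g\<in>A. f g \<in> carrier H) \<Longrightarrow> w \<in> words A \<Longrightarrow> letters_in H f w"
  by (auto simp: letters_in_def words_def)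

lemma (in group) eval_word_pres_eq:
  assumes "respects_relators G f A R" "pres_eq A R u v"
  shows "eval_word G f u = eval_word G f v"
  using assms(2)
proof (induction rule: pres_eq.induct)
  case (cancel u v g b)
  have ok: "letters_in G f u" "letters_in G f v" "f g \<in> carrier G"
    using cancel assms(1) by (auto simp: respects_relators_def intro: letters_in_words)
  then show ?case by (simp add: eval_word_append eval_word_cancel_pair)
next
  case (relator u v r)
  have ok: "letters_in G f u" "letters_in G f v" "letters_in G f r"
    using relator assms(1) by (auto simp: respects_relators_def intro: letters_in_words)
  have "eval_word G f r = \<one>" using relator assms(1) by (auto simp: respects_relators_def)
  then show ?case using ok by (simp add: eval_word_append)
qed auto

lemma (in group) pres_lift_pres_class:
  assumes "respects_relators G f A R" "w \<in> words A"
  shows "pres_lift G f (pres_class A R w) = eval_word G f w"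
  unfolding pres_lift_def
  using eval_word_pres_eq[OF assms(1) pres_eq_some_in_class[OF assms(2)]] by simp

lemma (in group) pres_lift_hom:
  assumes "respects_relators G f A R"
  shows "pres_lift G f \<in> hom (presented_group A R) G"
proof (rule homI)
  fix x assume "x \<in> carrier (presented_group A R)"
  then obtain u where "u \<in> words A" "x = pres_class A R u" by (auto simp: carrier_presented_group)
  then show "pres_lift G f x \<in> carrier G"
    using assms eval_word_closed[OF letters_in_words[of A f G u]]
      by (auto simp: pres_lift_pres_class respects_relators_def)
next
  fix x y assume "x \<in> carrier (presented_group A R)" "y \<in> carrier (presented_group A R)"
  then obtain u v where "u \<in> words A" "x = pres_class A R u" "v \<in> words A" "y = pres_class A R v"
    by (auto simp: carrier_presented_group)
  then show "pres_lift G f (x \<otimes>\<^bsub>presented_group A R\<^esub> y) = pres_lift G f x \<otimes> pres_lift G f y"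
    using assms eval_word_append[OF letters_in_words[of A f G u] letters_in_words[of A f G v]]
      by (auto simp: mult_presented_group pres_lift_pres_class respects_relators_def)
qed

lemma respects_relators_subst:
  assumes "\<forall>g\<in>A. m g \<in> words A" "\<forall>r\<in>R. r \<in> words A \<longrightarrow> pres_eq A R (subst_word m r) []"
  shows "respects_relators (presented_group A R) (\<lambda>g. pres_class A R (m g)) A R"
  unfolding respects_relators_def
proof (intro conjI ballI impI)
  fix g assume "g \<in> A" then show "pres_class A R (m g) \<in> carrier (presented_group A R)"
    using assms(1) by (simp add: pres_class_in_carrier)
next
  fix r assume r: "r \<in> R" "r \<in> words A"
  have sw: "subst_word m r \<in> words A" using assms(1) r(2)
    by (intro subst_word_words) (auto simp: words_def)
  have "eval_word (presented_group A R) (\<lambda>g. pres_class A R (m g)) r = pres_class A R (subst_word m r)"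
    using assms(1) r(2) by (intro eval_word_pres_class_subst) (auto simp: words_def)
  then show "eval_word (presented_group A R) (\<lambda>g. pres_class A R (m g)) r = \<one>\<^bsub>presented_group A R\<^esub>"
    using assms(2) r sw by (simp add: one_presented_group pres_class_eq_iff)
qed

lemma pres_lift_subst_pres_class:
  assumes "\<forall>g\<in>A. m g \<in> words A" "\<forall>r\<in>R. r \<in> words A \<longrightarrow> pres_eq A R (subst_word m r) []"
    "w \<in> words A"
  shows "pres_lift (presented_group A R) (\<lambda>g. pres_class A R (m g)) (pres_class A R w)
      = pres_class A R (subst_word m w)"
proof -
  have "eval_word (presented_group A R) (\<lambda>g. pres_class A R (m g)) w = pres_class A R (subst_word m w)"
    using assms(1,3) by (intro eval_word_pres_class_subst) (auto simp: words_def)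
  then show ?thesis
    using group.pres_lift_pres_class[OF group_presented_group respects_relators_subst[OF assms(1,2)] assms(3)] by simp
qed

definition relator_product :: "('g word \<times> 'g word \<times> bool) list \<Rightarrow> 'g word" where
  "relator_product cs = concat (map (\<lambda>(c, r, s). c @ (if s then r else winv r) @ winv c) cs)"

lemma relator_product_simps[simp]: "relator_product [] = []"
  "relator_product ((c, r, s) # cs) = c @ (if s then r else winv r) @ winv c @ relator_product cs"
  by (auto simp: relator_product_def)

lemma (in group) eval_word_relator_product:
  assumes "\<forall>(c, r, s) \<in> set cs. letters_in G f c \<and> letters_in G f r \<and> eval_word G f r = \<one>"
  shows "eval_word G f (relator_product cs) = \<one> \<and> letters_in G f (relator_product cs)"
  using assms
proof (induction cs)
  case Nil then show ?case by simp
next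
  case (Cons a cs)
  obtain c r s where a: "a = (c, r, s)" by (cases a) auto
  show ?case using Cons a
    by (auto simp: eval_word_append eval_word_winv)
qed

lemma (in group) eval_word_trivial_by_certificate:
  assumes "\<forall>(c, r, s) \<in> set cs. letters_in G f c \<and> letters_in G f r \<and> eval_word G f r = \<one>"
    "letters_in G f w" "free_reduce w = free_reduce (relator_product cs)"
  shows "eval_word G f w = \<one>"
  using eval_word_relator_product[OF assms(1)] assms(2,3) eval_word_free_reduce
  by metis

lemma pres_eq_trivial_by_certificate:
  assumes w: "w \<in> words A" and cs: "\<forall>(c, r, s) \<in> set cs. c \<in> words A \<and> r \<in> R \<and> r \<in> words A"
    and eq: "free_reduce w = free_reduce (relator_product cs)"
  shows "pres_eq A R w []"
proof -
  interpret G: group "presented_group A R" by (rule group_presented_group)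
  let ?f = "\<lambda>g. pres_class A R (gen g)"
  have fc: "\<forall>g\<in>A. ?f g \<in> carrier (presented_group A R)" by (simp add: pres_class_in_carrier)
  have "eval_word (presented_group A R) ?f w = \<one>\<^bsub>presented_group A R\<^esub>"
  proof (rule G.eval_word_trivial_by_certificate[OF _ letters_in_words[OF fc w] eq])
    show "\<forall>(c, r, s)\<in>set cs. letters_in (presented_group A R) ?f c \<and> letters_in (presented_group A R) ?f r \<and>
        eval_word (presented_group A R) ?f r = \<one>\<^bsub>presented_group A R\<^esub>"
    proof (clarify)
      fix c r s assume "(c, r, s) \<in> set cs"
      then have c: "c \<in> words A" and r: "r \<in> R" "r \<in> words A" using cs by auto
      have "eval_word (presented_group A R) ?f r = pres_class A R []"
        using r by (simp add: eval_word_pres_class_gen pres_class_eq_iff pres_eq_relator_trivial)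
      then show "letters_in (presented_group A R) ?f c \<and> letters_in (presented_group A R) ?f r \<and>
        eval_word (presented_group A R) ?f r = \<one>\<^bsub>presented_group A R\<^esub>"
        using letters_in_words[OF fc c] letters_in_words[OF fc r(2)] by (simp add: one_presented_group)
    qed
  qed
  then have "pres_class A R w = pres_class A R []" using w
    by (simp add: eval_word_pres_class_gen one_presented_group)
  then show ?thesis using w by (simp add: pres_class_eq_iff)
qed

definition cert_lookup :: "('a \<times> 'b list) list \<Rightarrow> 'a \<Rightarrow> 'b list" where
  "cert_lookup tab x = (case map_of tab x of Some w \<Rightarrow> w | None \<Rightarrow> [])"

text \<open>The certificate [(w_1, i_1, b_1), ...] asserts that u reduces freely to the same word as the
  product of the conjugates w_n (rels ! i_n)^\<epsilon> w_n^-1, where \<epsilon> = 1 if b_n and \<epsilon> = -1 otherwise.\<close>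

definition certifies ::
  "('g word \<Rightarrow> bool) \<Rightarrow> 'g word list \<Rightarrow> ('g word \<times> nat \<times> bool) list \<Rightarrow> 'g word \<Rightarrow> bool" where
  "certifies ok rels cert u \<longleftrightarrow>
     free_reduce u = free_reduce (relator_product (map (\<lambda>(w, i, s). (w, rels ! i, s)) cert)) \<and>
     list_all (\<lambda>(w, i, s). ok w \<and> i < length rels) cert"

lemma pres_eq_trivial_if_certifies:
  assumes "certifies ok rels cert u" "\<And>w. ok w \<Longrightarrow> w \<in> words A"
    and "set rels \<subseteq> R" "set rels \<subseteq> words A" "u \<in> words A"
  shows "pres_eq A R u []"
proof (rule pres_eq_trivial_by_certificate)
  show "free_reduce u = free_reduce (relator_product (map (\<lambda>(w, i, s). (w, rels ! i, s)) cert))"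
    using assms(1) by (simp add: certifies_def)
  show "\<forall>(c, r, s)\<in>set (map (\<lambda>(w, i, s). (w, rels ! i, s)) cert). c \<in> words A \<and> r \<in> R \<and> r \<in> words A"
    using assms(1-4) by (fastforce simp: certifies_def list_all_iff)
qed (rule assms(5))

section \<open>Cosets of X3 and the Reidemeister-Schreier data\<close>

text \<open>The elements of S3 = <s1, s2> are E0 = 1, E1 = s1, E2 = s2, E3 = s1 s2, E4 = s2 s1 and
  E5 = s1 s2 s1. The coset of X3 = FVP 3 \<inter> FVK 3 containing w is determined by (pi w, nu w), so
  pairs (p, q) of elements of S3 index the 36 cosets, and the generators act on them from the right:
  Sig i by (p, q) \<mapsto> (p s_i, q) and Rho i by (p, q) \<mapsto> (p s_i, q s_i).\<close>

datatype s3 = E0 | E1 | E2 | E3 | E4 | E5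

definition s3_mult :: "s3 \<Rightarrow> s3 \<Rightarrow> s3" where
  "s3_mult p q = (case p of
      E0 \<Rightarrow> (case q of E0 \<Rightarrow> E0 | E1 \<Rightarrow> E1 | E2 \<Rightarrow> E2 | E3 \<Rightarrow> E3 | E4 \<Rightarrow> E4 | E5 \<Rightarrow> E5)
    | E1 \<Rightarrow> (case q of E0 \<Rightarrow> E1 | E1 \<Rightarrow> E0 | E2 \<Rightarrow> E3 | E3 \<Rightarrow> E2 | E4 \<Rightarrow> E5 | E5 \<Rightarrow> E4)
    | E2 \<Rightarrow> (case q of E0 \<Rightarrow> E2 | E1 \<Rightarrow> E4 | E2 \<Rightarrow> E0 | E3 \<Rightarrow> E5 | E4 \<Rightarrow> E1 | E5 \<Rightarrow> E3)
    | E3 \<Rightarrow> (case q of E0 \<Rightarrow> E3 | E1 \<Rightarrow> E5 | E2 \<Rightarrow> E1 | E3 \<Rightarrow> E4 | E4 \<Rightarrow> E0 | E5 \<Rightarrow> E2)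
    | E4 \<Rightarrow> (case q of E0 \<Rightarrow> E4 | E1 \<Rightarrow> E2 | E2 \<Rightarrow> E5 | E3 \<Rightarrow> E0 | E4 \<Rightarrow> E3 | E5 \<Rightarrow> E1)
    | E5 \<Rightarrow> (case q of E0 \<Rightarrow> E5 | E1 \<Rightarrow> E3 | E2 \<Rightarrow> E4 | E3 \<Rightarrow> E1 | E4 \<Rightarrow> E2 | E5 \<Rightarrow> E0))"

definition s3_gen :: "nat \<Rightarrow> s3" where
  "s3_gen i = (if i = 1 then E1 else E2)"

definition all_s3 :: "s3 list" where
  "all_s3 = [E0, E1, E2, E3, E4, E5]"

definition s3_normal_form :: "s3 \<Rightarrow> nat list" where
  "s3_normal_form p = (case p of E0 \<Rightarrow> [] | E1 \<Rightarrow> [1] | E2 \<Rightarrow> [2]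
     | E3 \<Rightarrow> [1, 2] | E4 \<Rightarrow> [2, 1] | E5 \<Rightarrow> [1, 2, 1])"

datatype letter = GS1 | GS2 | GR1 | GR2

definition letter_of :: "fvb_gen \<Rightarrow> letter" where
  "letter_of g = (case g of Sig i \<Rightarrow> (if i = 1 then GS1 else GS2)
                          | Rho i \<Rightarrow> (if i = 1 then GR1 else GR2))"

definition gen_of_letter :: "letter \<Rightarrow> fvb_gen" where
  "gen_of_letter h = (case h of GS1 \<Rightarrow> Sig 1 | GS2 \<Rightarrow> Sig 2 | GR1 \<Rightarrow> Rho 1 | GR2 \<Rightarrow> Rho 2)"

definition coset_act_letter :: "s3 \<times> s3 \<Rightarrow> letter \<Rightarrow> s3 \<times> s3" where
  "coset_act_letter c h = (case c of (p, q) \<Rightarrow> (case h of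
       GS1 \<Rightarrow> (s3_mult p (s3_gen 1), q)
     | GS2 \<Rightarrow> (s3_mult p (s3_gen 2), q)
     | GR1 \<Rightarrow> (s3_mult p (s3_gen 1), s3_mult q (s3_gen 1))
     | GR2 \<Rightarrow> (s3_mult p (s3_gen 2), s3_mult q (s3_gen 2))))"

definition coset_act :: "s3 \<times> s3 \<Rightarrow> fvb_gen \<Rightarrow> s3 \<times> s3" where
  "coset_act c g = coset_act_letter c (letter_of g)"

definition coset_act_word :: "s3 \<times> s3 \<Rightarrow> fvb_gen word \<Rightarrow> s3 \<times> s3" where
  "coset_act_word c w = foldl (\<lambda>c x. coset_act c (fst x)) c w"

definition all_cosets :: "(s3 \<times> s3) list" where
  "all_cosets = List.product all_s3 all_s3"

definition fvb3_gen_list :: "fvb_gen list" where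
  "fvb3_gen_list = [Sig 1, Sig 2, Rho 1, Rho 2]"

definition fvb3_rel_list :: "fvb_gen word list" where
  "fvb3_rel_list =
    [relation (gen (Sig 1) @ gen (Sig 1)) [], relation (gen (Rho 1) @ gen (Rho 1)) [],
     relation (gen (Sig 2) @ gen (Sig 2)) [], relation (gen (Rho 2) @ gen (Rho 2)) [],
     relation (gen (Sig 1) @ gen (Sig 2) @ gen (Sig 1)) (gen (Sig 2) @ gen (Sig 1) @ gen (Sig 2)),
     relation (gen (Rho 1) @ gen (Rho 2) @ gen (Rho 1)) (gen (Rho 2) @ gen (Rho 1) @ gen (Rho 2)),
     relation (gen (Rho 1) @ gen (Rho 2) @ gen (Sig 1)) (gen (Sig 2) @ gen (Rho 1) @ gen (Rho 2))]"

definition tgt_gen_list :: "tgt_gen list" where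
  "tgt_gen_list = [Ta, Tb, Tf 0, Tf 1, Tf 2, Tx, Ty, Tu, Tv, Tp, Tq]"

definition tgt_rel_list :: "tgt_gen word list" where
  "tgt_rel_list =
    [relation (gen Ta @ gen Tb) (gen Tb @ gen Ta),
     relation (gen Tx @ gen Ty) (gen Tu @ gen Tv),
     relation (gen Tv @ gen Tu) (gen Tp @ gen Tq),
     relation (gen Tq @ gen Tp) (gen Ty @ gen Tx)]"

definition is_fvb3_word :: "fvb_gen word \<Rightarrow> bool" where
  "is_fvb3_word w = list_all (\<lambda>x. fst x \<in> set fvb3_gen_list) w"

definition is_tgt_word :: "tgt_gen word \<Rightarrow> bool" where
  "is_tgt_word w = list_all (\<lambda>x. fst x \<in> set tgt_gen_list) w"

definition transversal :: "s3 \<times> s3 \<Rightarrow> fvb_gen word" where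
  "transversal c = (case c of (p, q) \<Rightarrow> (case p of
      E0 \<Rightarrow> (case q of
          E0 \<Rightarrow> []
        | E1 \<Rightarrow> [(Sig 1, True), (Rho 1, True)]
        | E2 \<Rightarrow> [(Sig 2, True), (Rho 2, True)]
        | E3 \<Rightarrow> [(Sig 1, True), (Rho 1, True), (Sig 2, True), (Rho 2, True)]
        | E4 \<Rightarrow> [(Sig 1, True), (Sig 2, True), (Rho 2, True), (Rho 1, True)]
        | E5 \<Rightarrow> [(Rho 1, True), (Sig 2, True), (Rho 2, True), (Rho 1, True)])
    | E1 \<Rightarrow> (case q of
          E0 \<Rightarrow> [(Sig 1, True)]
        | E1 \<Rightarrow> [(Rho 1, True)]
        | E2 \<Rightarrow> [(Sig 1, True), (Sig 2, True), (Rho 2, True)]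
        | E3 \<Rightarrow> [(Rho 1, True), (Sig 2, True), (Rho 2, True)]
        | E4 \<Rightarrow> [(Sig 2, True), (Rho 2, True), (Rho 1, True)]
        | E5 \<Rightarrow> [(Sig 1, True), (Rho 1, True), (Sig 2, True), (Rho 2, True), (Rho 1, True)])
    | E2 \<Rightarrow> (case q of
          E0 \<Rightarrow> [(Sig 2, True)]
        | E1 \<Rightarrow> [(Sig 1, True), (Rho 1, True), (Sig 2, True)]
        | E2 \<Rightarrow> [(Rho 2, True)]
        | E3 \<Rightarrow> [(Sig 1, True), (Rho 1, True), (Rho 2, True)]
        | E4 \<Rightarrow> [(Rho 2, True), (Sig 1, True), (Rho 1, True)]
        | E5 \<Rightarrow> [(Sig 1, True), (Sig 2, True), (Rho 1, True), (Rho 2, True), (Rho 1, True)])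
    | E3 \<Rightarrow> (case q of
          E0 \<Rightarrow> [(Sig 1, True), (Sig 2, True)]
        | E1 \<Rightarrow> [(Rho 1, True), (Sig 2, True)]
        | E2 \<Rightarrow> [(Sig 1, True), (Rho 2, True)]
        | E3 \<Rightarrow> [(Rho 1, True), (Rho 2, True)]
        | E4 \<Rightarrow> [(Sig 1, True), (Rho 2, True), (Sig 1, True), (Rho 1, True)]
        | E5 \<Rightarrow> [(Sig 2, True), (Rho 1, True), (Rho 2, True), (Rho 1, True)])
    | E4 \<Rightarrow> (case q of
          E0 \<Rightarrow> [(Sig 2, True), (Sig 1, True)]
        | E1 \<Rightarrow> [(Sig 2, True), (Rho 1, True)]
        | E2 \<Rightarrow> [(Rho 2, True), (Sig 1, True)]
        | E3 \<Rightarrow> [(Sig 1, True), (Sig 2, True), (Rho 1, True), (Rho 2, True)]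
        | E4 \<Rightarrow> [(Rho 2, True), (Rho 1, True)]
        | E5 \<Rightarrow> [(Sig 1, True), (Rho 1, True), (Rho 2, True), (Rho 1, True)])
    | E5 \<Rightarrow> (case q of
          E0 \<Rightarrow> [(Sig 1, True), (Sig 2, True), (Sig 1, True)]
        | E1 \<Rightarrow> [(Sig 1, True), (Sig 2, True), (Rho 1, True)]
        | E2 \<Rightarrow> [(Sig 1, True), (Rho 2, True), (Sig 1, True)]
        | E3 \<Rightarrow> [(Sig 2, True), (Rho 1, True), (Rho 2, True)]
        | E4 \<Rightarrow> [(Sig 1, True), (Rho 2, True), (Rho 1, True)]
        | E5 \<Rightarrow> [(Rho 1, True), (Rho 2, True), (Rho 1, True)])))"

text \<open>The index (c, h) stands for the Schreier generator transversal c * h * transversal (c h)^-1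
  of X3; rs_rewrite c w is the Reidemeister-Schreier rewriting of w read from the coset c.\<close>

type_synonym schreier_index = "(s3 \<times> s3) \<times> letter"

definition all_letters :: "letter list" where
  "all_letters = [GS1, GS2, GR1, GR2]"

definition all_schreier_indices :: "schreier_index list" where
  "all_schreier_indices = List.product all_cosets all_letters"

fun rs_rewrite :: "s3 \<times> s3 \<Rightarrow> fvb_gen word \<Rightarrow> schreier_index word" where
  "rs_rewrite c [] = []"
| "rs_rewrite c ((g, b) # w) =
     (if b then ((c, letter_of g), True) # rs_rewrite (coset_act c g) w
      else ((coset_act c g, letter_of g), False) # rs_rewrite (coset_act c g) w)"

definition schreier_to_target :: "schreier_index \<Rightarrow> tgt_gen word" where
  "schreier_to_target s = (case s of ((p, q), g) \<Rightarrow> (case p of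
      E0 \<Rightarrow> (case q of
          E0 \<Rightarrow> (case g of GS1 \<Rightarrow> [] | GS2 \<Rightarrow> [] | GR1 \<Rightarrow> [] | GR2 \<Rightarrow> [])
        | E1 \<Rightarrow> (case g of GS1 \<Rightarrow> [(Tf 2, False), (Tx, True), (Tq, True)] | GS2 \<Rightarrow> [] | GR1 \<Rightarrow> [] | GR2 \<Rightarrow> [])
        | E2 \<Rightarrow> (case g of GS1 \<Rightarrow> [(Tx, True)] | GS2 \<Rightarrow> [(Tx, True), (Tx, True), (Ty, True), (Tv, False)] | GR1 \<Rightarrow> [] | GR2 \<Rightarrow> [])
        | E3 \<Rightarrow> (case g of GS1 \<Rightarrow> [(Tf 0, True)] | GS2 \<Rightarrow> [(Tf 1, True)] | GR1 \<Rightarrow> [] | GR2 \<Rightarrow> [])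
        | E4 \<Rightarrow> (case g of GS1 \<Rightarrow> [(Tb, True)] | GS2 \<Rightarrow> [(Ta, True), (Tf 1, False), (Tf 0, True)] | GR1 \<Rightarrow> [] | GR2 \<Rightarrow> [])
        | E5 \<Rightarrow> (case g of GS1 \<Rightarrow> [(Tv, True), (Tf 2, True)] | GS2 \<Rightarrow> [(Tv, True)] | GR1 \<Rightarrow> [] | GR2 \<Rightarrow> []))
    | E1 \<Rightarrow> (case q of
          E0 \<Rightarrow> (case g of GS1 \<Rightarrow> [] | GS2 \<Rightarrow> [] | GR1 \<Rightarrow> [] | GR2 \<Rightarrow> [])
        | E1 \<Rightarrow> (case g of GS1 \<Rightarrow> [(Tq, False), (Tx, False), (Tf 2, True)] | GS2 \<Rightarrow> [] | GR1 \<Rightarrow> [] | GR2 \<Rightarrow> [])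
        | E2 \<Rightarrow> (case g of GS1 \<Rightarrow> [(Tx, False)] | GS2 \<Rightarrow> [(Tx, True), (Ty, True), (Tf 2, True)] | GR1 \<Rightarrow> [] | GR2 \<Rightarrow> [])
        | E3 \<Rightarrow> (case g of GS1 \<Rightarrow> [(Tf 0, False)] | GS2 \<Rightarrow> [(Tf 0, False), (Tf 1, True), (Tb, True)] | GR1 \<Rightarrow> [] | GR2 \<Rightarrow> [])
        | E4 \<Rightarrow> (case g of GS1 \<Rightarrow> [(Tb, False)] | GS2 \<Rightarrow> [(Tb, False), (Ta, True), (Tb, True), (Tf 1, False)] | GR1 \<Rightarrow> [] | GR2 \<Rightarrow> [])
        | E5 \<Rightarrow> (case g of GS1 \<Rightarrow> [(Tf 2, False), (Tv, False)] | GS2 \<Rightarrow> [(Tf 2, False), (Tx, True), (Ty, True), (Tx, True), (Tq, True), (Tv, True), (Ty, False), (Tx, False), (Tx, False)] | GR1 \<Rightarrow> [] | GR2 \<Rightarrow> []))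
    | E2 \<Rightarrow> (case q of
          E0 \<Rightarrow> (case g of GS1 \<Rightarrow> [] | GS2 \<Rightarrow> [] | GR1 \<Rightarrow> [] | GR2 \<Rightarrow> [])
        | E1 \<Rightarrow> (case g of GS1 \<Rightarrow> [(Tf 2, False), (Tx, True), (Tq, True), (Tv, True), (Tx, False)] | GS2 \<Rightarrow> [] | GR1 \<Rightarrow> [(Tf 1, True), (Ta, False)] | GR2 \<Rightarrow> [])
        | E2 \<Rightarrow> (case g of GS1 \<Rightarrow> [] | GS2 \<Rightarrow> [(Tv, True), (Ty, False), (Tx, False), (Tx, False)] | GR1 \<Rightarrow> [] | GR2 \<Rightarrow> [])
        | E3 \<Rightarrow> (case g of GS1 \<Rightarrow> [] | GS2 \<Rightarrow> [(Tf 1, False)] | GR1 \<Rightarrow> [] | GR2 \<Rightarrow> [])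
        | E4 \<Rightarrow> (case g of GS1 \<Rightarrow> [(Tf 0, False), (Tf 1, True), (Tb, True)] | GS2 \<Rightarrow> [(Tf 0, False), (Tf 1, True), (Ta, False)] | GR1 \<Rightarrow> [] | GR2 \<Rightarrow> [])
        | E5 \<Rightarrow> (case g of GS1 \<Rightarrow> [(Tx, True), (Ty, True), (Tf 2, True)] | GS2 \<Rightarrow> [(Tv, False)] | GR1 \<Rightarrow> [] | GR2 \<Rightarrow> []))
    | E3 \<Rightarrow> (case q of
          E0 \<Rightarrow> (case g of GS1 \<Rightarrow> [] | GS2 \<Rightarrow> [] | GR1 \<Rightarrow> [] | GR2 \<Rightarrow> [])
        | E1 \<Rightarrow> (case g of GS1 \<Rightarrow> [(Tv, True)] | GS2 \<Rightarrow> [] | GR1 \<Rightarrow> [(Tf 0, False), (Tf 1, True), (Ta, False)] | GR2 \<Rightarrow> [])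
        | E2 \<Rightarrow> (case g of GS1 \<Rightarrow> [] | GS2 \<Rightarrow> [(Tf 2, False), (Ty, False), (Tx, False)] | GR1 \<Rightarrow> [] | GR2 \<Rightarrow> [])
        | E3 \<Rightarrow> (case g of GS1 \<Rightarrow> [] | GS2 \<Rightarrow> [(Tb, False), (Tf 1, False), (Tf 0, True)] | GR1 \<Rightarrow> [] | GR2 \<Rightarrow> [])
        | E4 \<Rightarrow> (case g of GS1 \<Rightarrow> [(Tf 1, True)] | GS2 \<Rightarrow> [(Tf 1, True), (Tb, False), (Ta, False), (Tb, True)] | GR1 \<Rightarrow> [] | GR2 \<Rightarrow> [])
        | E5 \<Rightarrow> (case g of GS1 \<Rightarrow> [(Tx, True), (Tx, True), (Ty, True), (Tv, False)] | GS2 \<Rightarrow> [(Tx, True), (Tx, True), (Ty, True), (Tv, False), (Tq, False), (Tx, False), (Ty, False), (Tx, False), (Tf 2, True)] | GR1 \<Rightarrow> [] | GR2 \<Rightarrow> []))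
    | E4 \<Rightarrow> (case q of
          E0 \<Rightarrow> (case g of GS1 \<Rightarrow> [] | GS2 \<Rightarrow> [] | GR1 \<Rightarrow> [(Ta, True), (Tf 1, False)] | GR2 \<Rightarrow> [(Ta, True), (Tf 1, False)])
        | E1 \<Rightarrow> (case g of GS1 \<Rightarrow> [(Tx, True), (Tv, False), (Tq, False), (Tx, False), (Tf 2, True)] | GS2 \<Rightarrow> [(Tx, True)] | GR1 \<Rightarrow> [] | GR2 \<Rightarrow> [])
        | E2 \<Rightarrow> (case g of GS1 \<Rightarrow> [] | GS2 \<Rightarrow> [(Tv, True), (Tf 2, True)] | GR1 \<Rightarrow> [] | GR2 \<Rightarrow> [(Tf 0, False), (Tf 1, True), (Ta, False)])
        | E3 \<Rightarrow> (case g of GS1 \<Rightarrow> [] | GS2 \<Rightarrow> [(Tb, True)] | GR1 \<Rightarrow> [] | GR2 \<Rightarrow> [])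
        | E4 \<Rightarrow> (case g of GS1 \<Rightarrow> [(Tb, False), (Tf 1, False), (Tf 0, True)] | GS2 \<Rightarrow> [] | GR1 \<Rightarrow> [] | GR2 \<Rightarrow> [])
        | E5 \<Rightarrow> (case g of GS1 \<Rightarrow> [(Tf 2, False), (Ty, False), (Tx, False)] | GS2 \<Rightarrow> [(Tf 2, False), (Tx, True), (Tq, True)] | GR1 \<Rightarrow> [] | GR2 \<Rightarrow> []))
    | E5 \<Rightarrow> (case q of
          E0 \<Rightarrow> (case g of GS1 \<Rightarrow> [] | GS2 \<Rightarrow> [] | GR1 \<Rightarrow> [(Ta, True), (Tf 1, False), (Tf 0, True)] | GR2 \<Rightarrow> [(Ta, True), (Tf 1, False), (Tf 0, True)])
        | E1 \<Rightarrow> (case g of GS1 \<Rightarrow> [(Tv, False)] | GS2 \<Rightarrow> [(Tx, False)] | GR1 \<Rightarrow> [] | GR2 \<Rightarrow> [])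
        | E2 \<Rightarrow> (case g of GS1 \<Rightarrow> [] | GS2 \<Rightarrow> [(Tf 2, False), (Tv, False)] | GR1 \<Rightarrow> [] | GR2 \<Rightarrow> [(Tf 1, True), (Ta, False)])
        | E3 \<Rightarrow> (case g of GS1 \<Rightarrow> [] | GS2 \<Rightarrow> [(Tb, False)] | GR1 \<Rightarrow> [] | GR2 \<Rightarrow> [])
        | E4 \<Rightarrow> (case g of GS1 \<Rightarrow> [(Tf 1, False)] | GS2 \<Rightarrow> [] | GR1 \<Rightarrow> [] | GR2 \<Rightarrow> [])
        | E5 \<Rightarrow> (case g of GS1 \<Rightarrow> [(Tv, True), (Ty, False), (Tx, False), (Tx, False)] | GS2 \<Rightarrow> [(Tq, False), (Tx, False), (Tf 2, True)] | GR1 \<Rightarrow> [] | GR2 \<Rightarrow> []))))"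

definition target_to_schreier :: "tgt_gen \<Rightarrow> schreier_index word" where
  "target_to_schreier a = (case a of
      Ta \<Rightarrow> [(((E0, E4), GS2), True), (((E0, E3), GS1), False), (((E0, E3), GS2), True)]
    | Tb \<Rightarrow> [(((E0, E4), GS1), True)]
    | Tf n \<Rightarrow> (if n = 0 then [(((E0, E3), GS1), True)] else if n = 1 then [(((E0, E3), GS2), True)] else [(((E0, E5), GS2), False), (((E0, E5), GS1), True)])
    | Tx \<Rightarrow> [(((E0, E2), GS1), True)]
    | Ty \<Rightarrow> [(((E0, E2), GS1), False), (((E0, E2), GS1), False), (((E0, E2), GS2), True), (((E0, E5), GS2), True)]
    | Tu \<Rightarrow> [(((E0, E2), GS1), False), (((E0, E2), GS2), True)]
    | Tv \<Rightarrow> [(((E0, E5), GS2), True)]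
    | Tp \<Rightarrow> [(((E0, E5), GS2), True), (((E0, E2), GS1), False), (((E0, E2), GS2), True), (((E0, E1), GS1), False), (((E0, E5), GS1), False), (((E0, E5), GS2), True), (((E0, E2), GS1), True)]
    | Tq \<Rightarrow> [(((E0, E2), GS1), False), (((E0, E5), GS2), False), (((E0, E5), GS1), True), (((E0, E1), GS1), True)])"

definition rs_target :: "s3 \<times> s3 \<Rightarrow> fvb_gen word \<Rightarrow> tgt_gen word" where
  "rs_target c w = subst_word schreier_to_target (rs_rewrite c w)"

definition schreier_roundtrip :: "schreier_index \<Rightarrow> schreier_index word" where
  "schreier_roundtrip s = subst_word target_to_schreier (schreier_to_target s)"

text \<open>How each Schreier generator is disposed of: it is freely trivial (a tree edge of the
  transversal), it is kept, or it is the r-th eliminated one, using the rewritten relator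
  rs_rewrite c (fvb3_rel_list ! j), in which it occurs at position k next to generators
  eliminated earlier or kept.\<close>

datatype elimination_step = Tree_edge | Kept | Eliminated nat "s3 \<times> s3" nat nat

definition elimination :: "schreier_index \<Rightarrow> elimination_step" where
  "elimination s = (case s of ((p, q), g) \<Rightarrow> (case p of
      E0 \<Rightarrow> (case q of
          E0 \<Rightarrow> (case g of GS1 \<Rightarrow> Tree_edge | GS2 \<Rightarrow> Tree_edge | GR1 \<Rightarrow> Tree_edge | GR2 \<Rightarrow> Tree_edge)
        | E1 \<Rightarrow> (case g of GS1 \<Rightarrow> Kept | GS2 \<Rightarrow> Tree_edge | GR1 \<Rightarrow> Eliminated 8 (E0, E1) 1 0 | GR2 \<Rightarrow> Tree_edge)
        | E2 \<Rightarrow> (case g of GS1 \<Rightarrow> Kept | GS2 \<Rightarrow> Kept | GR1 \<Rightarrow> Tree_edge | GR2 \<Rightarrow> Eliminated 13 (E0, E2) 3 0)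
        | E3 \<Rightarrow> (case g of GS1 \<Rightarrow> Kept | GS2 \<Rightarrow> Kept | GR1 \<Rightarrow> Tree_edge | GR2 \<Rightarrow> Eliminated 15 (E0, E3) 3 0)
        | E4 \<Rightarrow> (case g of GS1 \<Rightarrow> Kept | GS2 \<Rightarrow> Kept | GR1 \<Rightarrow> Eliminated 16 (E0, E4) 1 0 | GR2 \<Rightarrow> Eliminated 42 (E3, E0) 5 3)
        | E5 \<Rightarrow> (case g of GS1 \<Rightarrow> Kept | GS2 \<Rightarrow> Kept | GR1 \<Rightarrow> Eliminated 17 (E0, E5) 1 0 | GR2 \<Rightarrow> Eliminated 72 (E1, E3) 5 1))
    | E1 \<Rightarrow> (case q of
          E0 \<Rightarrow> (case g of GS1 \<Rightarrow> Eliminated 1 (E0, E0) 0 1 | GS2 \<Rightarrow> Tree_edge | GR1 \<Rightarrow> Tree_edge | GR2 \<Rightarrow> Tree_edge)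
        | E1 \<Rightarrow> (case g of GS1 \<Rightarrow> Eliminated 52 (E0, E1) 0 1 | GS2 \<Rightarrow> Tree_edge | GR1 \<Rightarrow> Eliminated 2 (E0, E0) 1 1 | GR2 \<Rightarrow> Tree_edge)
        | E2 \<Rightarrow> (case g of GS1 \<Rightarrow> Eliminated 55 (E0, E2) 0 1 | GS2 \<Rightarrow> Eliminated 91 (E0, E2) 4 1 | GR1 \<Rightarrow> Tree_edge | GR2 \<Rightarrow> Eliminated 26 (E1, E2) 3 0)
        | E3 \<Rightarrow> (case g of GS1 \<Rightarrow> Eliminated 61 (E0, E3) 0 1 | GS2 \<Rightarrow> Eliminated 67 (E0, E3) 4 1 | GR1 \<Rightarrow> Tree_edge | GR2 \<Rightarrow> Eliminated 27 (E1, E3) 3 0)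
        | E4 \<Rightarrow> (case g of GS1 \<Rightarrow> Eliminated 63 (E0, E4) 0 1 | GS2 \<Rightarrow> Eliminated 84 (E0, E4) 4 1 | GR1 \<Rightarrow> Eliminated 12 (E0, E2) 1 1 | GR2 \<Rightarrow> Eliminated 31 (E2, E0) 5 3)
        | E5 \<Rightarrow> (case g of GS1 \<Rightarrow> Eliminated 87 (E0, E5) 0 1 | GS2 \<Rightarrow> Eliminated 95 (E0, E5) 4 1 | GR1 \<Rightarrow> Eliminated 14 (E0, E3) 1 1 | GR2 \<Rightarrow> Eliminated 82 (E0, E3) 5 1))
    | E2 \<Rightarrow> (case q of
          E0 \<Rightarrow> (case g of GS1 \<Rightarrow> Tree_edge | GS2 \<Rightarrow> Eliminated 3 (E0, E0) 2 1 | GR1 \<Rightarrow> Tree_edge | GR2 \<Rightarrow> Tree_edge)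
        | E1 \<Rightarrow> (case g of GS1 \<Rightarrow> Eliminated 97 (E1, E1) 4 2 | GS2 \<Rightarrow> Eliminated 9 (E0, E1) 2 1 | GR1 \<Rightarrow> Eliminated 78 (E2, E1) 1 0 | GR2 \<Rightarrow> Tree_edge)
        | E2 \<Rightarrow> (case g of GS1 \<Rightarrow> Tree_edge | GS2 \<Rightarrow> Eliminated 58 (E0, E2) 2 1 | GR1 \<Rightarrow> Tree_edge | GR2 \<Rightarrow> Eliminated 4 (E0, E0) 3 1)
        | E3 \<Rightarrow> (case g of GS1 \<Rightarrow> Eliminated 22 (E1, E0) 6 2 | GS2 \<Rightarrow> Eliminated 62 (E0, E3) 2 1 | GR1 \<Rightarrow> Tree_edge | GR2 \<Rightarrow> Eliminated 10 (E0, E1) 3 1)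
        | E4 \<Rightarrow> (case g of GS1 \<Rightarrow> Eliminated 73 (E1, E3) 6 2 | GS2 \<Rightarrow> Eliminated 68 (E0, E4) 2 1 | GR1 \<Rightarrow> Eliminated 39 (E2, E4) 1 0 | GR2 \<Rightarrow> Eliminated 75 (E2, E4) 3 0)
        | E5 \<Rightarrow> (case g of GS1 \<Rightarrow> Eliminated 92 (E1, E2) 6 2 | GS2 \<Rightarrow> Eliminated 94 (E0, E5) 2 1 | GR1 \<Rightarrow> Eliminated 40 (E2, E5) 1 0 | GR2 \<Rightarrow> Eliminated 49 (E4, E3) 5 1))
    | E3 \<Rightarrow> (case q of
          E0 \<Rightarrow> (case g of GS1 \<Rightarrow> Tree_edge | GS2 \<Rightarrow> Eliminated 18 (E1, E0) 2 1 | GR1 \<Rightarrow> Tree_edge | GR2 \<Rightarrow> Tree_edge)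
        | E1 \<Rightarrow> (case g of GS1 \<Rightarrow> Eliminated 96 (E0, E5) 6 2 | GS2 \<Rightarrow> Eliminated 23 (E1, E1) 2 1 | GR1 \<Rightarrow> Eliminated 71 (E1, E1) 6 4 | GR2 \<Rightarrow> Tree_edge)
        | E2 \<Rightarrow> (case g of GS1 \<Rightarrow> Tree_edge | GS2 \<Rightarrow> Eliminated 90 (E5, E2) 4 1 | GR1 \<Rightarrow> Tree_edge | GR2 \<Rightarrow> Eliminated 19 (E1, E0) 3 1)
        | E3 \<Rightarrow> (case g of GS1 \<Rightarrow> Eliminated 7 (E0, E0) 6 2 | GS2 \<Rightarrow> Eliminated 66 (E5, E3) 4 1 | GR1 \<Rightarrow> Tree_edge | GR2 \<Rightarrow> Eliminated 24 (E1, E1) 3 1)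
        | E4 \<Rightarrow> (case g of GS1 \<Rightarrow> Eliminated 83 (E0, E3) 6 2 | GS2 \<Rightarrow> Eliminated 85 (E1, E4) 2 1 | GR1 \<Rightarrow> Eliminated 44 (E3, E4) 1 0 | GR2 \<Rightarrow> Eliminated 81 (E4, E0) 5 3)
        | E5 \<Rightarrow> (case g of GS1 \<Rightarrow> Eliminated 59 (E0, E2) 6 2 | GS2 \<Rightarrow> Eliminated 98 (E1, E5) 2 1 | GR1 \<Rightarrow> Eliminated 45 (E3, E5) 1 0 | GR2 \<Rightarrow> Eliminated 46 (E3, E5) 3 0))
    | E4 \<Rightarrow> (case q of
          E0 \<Rightarrow> (case g of GS1 \<Rightarrow> Eliminated 28 (E2, E0) 0 1 | GS2 \<Rightarrow> Eliminated 5 (E0, E0) 4 3 | GR1 \<Rightarrow> Eliminated 77 (E4, E0) 6 0 | GR2 \<Rightarrow> Eliminated 79 (E2, E1) 6 1)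
        | E1 \<Rightarrow> (case g of GS1 \<Rightarrow> Eliminated 99 (E2, E1) 0 1 | GS2 \<Rightarrow> Eliminated 56 (E4, E1) 6 5 | GR1 \<Rightarrow> Eliminated 29 (E2, E0) 1 1 | GR2 \<Rightarrow> Tree_edge)
        | E2 \<Rightarrow> (case g of GS1 \<Rightarrow> Eliminated 33 (E2, E2) 0 1 | GS2 \<Rightarrow> Eliminated 88 (E4, E2) 6 5 | GR1 \<Rightarrow> Tree_edge | GR2 \<Rightarrow> Eliminated 69 (E0, E4) 6 3)
        | E3 \<Rightarrow> (case g of GS1 \<Rightarrow> Eliminated 36 (E2, E3) 0 1 | GS2 \<Rightarrow> Eliminated 64 (E4, E3) 6 5 | GR1 \<Rightarrow> Tree_edge | GR2 \<Rightarrow> Eliminated 48 (E4, E3) 3 0)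
        | E4 \<Rightarrow> (case g of GS1 \<Rightarrow> Eliminated 74 (E2, E4) 0 1 | GS2 \<Rightarrow> Eliminated 50 (E4, E4) 6 5 | GR1 \<Rightarrow> Eliminated 34 (E2, E2) 1 1 | GR2 \<Rightarrow> Eliminated 6 (E0, E0) 5 3)
        | E5 \<Rightarrow> (case g of GS1 \<Rightarrow> Eliminated 93 (E2, E5) 0 1 | GS2 \<Rightarrow> Eliminated 53 (E4, E5) 6 5 | GR1 \<Rightarrow> Eliminated 37 (E2, E3) 1 1 | GR2 \<Rightarrow> Eliminated 11 (E0, E1) 5 3))
    | E5 \<Rightarrow> (case q of
          E0 \<Rightarrow> (case g of GS1 \<Rightarrow> Eliminated 30 (E2, E0) 4 2 | GS2 \<Rightarrow> Eliminated 20 (E1, E0) 4 3 | GR1 \<Rightarrow> Eliminated 76 (E2, E4) 5 2 | GR2 \<Rightarrow> Eliminated 70 (E4, E2) 3 1)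
        | E1 \<Rightarrow> (case g of GS1 \<Rightarrow> Eliminated 100 (E2, E1) 4 2 | GS2 \<Rightarrow> Eliminated 57 (E5, E1) 2 0 | GR1 \<Rightarrow> Eliminated 41 (E3, E0) 1 1 | GR2 \<Rightarrow> Tree_edge)
        | E2 \<Rightarrow> (case g of GS1 \<Rightarrow> Eliminated 43 (E3, E2) 0 1 | GS2 \<Rightarrow> Eliminated 89 (E5, E2) 2 0 | GR1 \<Rightarrow> Tree_edge | GR2 \<Rightarrow> Eliminated 80 (E4, E0) 3 1)
        | E3 \<Rightarrow> (case g of GS1 \<Rightarrow> Eliminated 32 (E2, E0) 6 2 | GS2 \<Rightarrow> Eliminated 65 (E5, E3) 2 0 | GR1 \<Rightarrow> Tree_edge | GR2 \<Rightarrow> Eliminated 47 (E3, E5) 5 1)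
        | E4 \<Rightarrow> (case g of GS1 \<Rightarrow> Eliminated 86 (E2, E3) 6 2 | GS2 \<Rightarrow> Eliminated 51 (E5, E4) 2 0 | GR1 \<Rightarrow> Eliminated 38 (E2, E3) 5 2 | GR2 \<Rightarrow> Eliminated 21 (E1, E0) 5 3)
        | E5 \<Rightarrow> (case g of GS1 \<Rightarrow> Eliminated 60 (E2, E2) 6 2 | GS2 \<Rightarrow> Eliminated 54 (E5, E5) 2 0 | GR1 \<Rightarrow> Eliminated 35 (E2, E2) 5 2 | GR2 \<Rightarrow> Eliminated 25 (E1, E1) 5 3))))"

definition elim_rank :: "schreier_index \<Rightarrow> nat" where
  "elim_rank s = (case elimination s of Eliminated r c j k \<Rightarrow> r | _ \<Rightarrow> 0)"

text \<open>A key missing from a certificate table stands for the empty certificate: the word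
  concerned must then reduce freely to the empty word.\<close>

definition rewritten_relator_cert :: "(((s3 \<times> s3) \<times> nat) \<times> (tgt_gen word \<times> nat \<times> bool) list) list" where
  "rewritten_relator_cert =
   [(((E3, E5), 6), [([(Tx, True), (Tv, False), (Tq, False)], 3, False), ([(Tx, True), (Tv, False)], 2, False), ([(Tx, True)], 1, False)]),
    (((E3, E4), 6), [([(Tf 1, True), (Ta, False), (Tb, False)], 0, True)]),
    (((E1, E5), 6), [([(Tf 2, False), (Tx, True), (Tq, True), (Tv, True)], 1, True), ([(Tf 2, False), (Tx, True), (Tq, True)], 2, True), ([(Tf 2, False), (Tx, True)], 3, True)]),
    (((E1, E4), 6), [([(Ta, True), (Tb, False), (Ta, False)], 0, False)])]"

definition target_gen_cert :: "(tgt_gen \<times> (tgt_gen word \<times> nat \<times> bool) list) list" where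
  "target_gen_cert = [(Tu, [([], 1, True)]),
    (Tp, [([(Tv, True)], 1, True), ([], 2, True)])]"

definition target_relator_cert :: "(nat \<times> (schreier_index word \<times> ((s3 \<times> s3) \<times> nat) \<times> bool) list) list" where
  "target_relator_cert = [(0, [([(((E0, E4), GS1), True)], ((E1, E4), 6), False)]),
    (3, [([(((E0, E2), GS1), False), (((E0, E2), GS1), False), (((E0, E2), GS2), True), (((E0, E5), GS1), True), (((E0, E1), GS1), True), (((E0, E2), GS2), False), (((E0, E2), GS1), True), (((E0, E5), GS2), False), (((E0, E1), GS1), False)], ((E1, E5), 6), True)])]"

definition pi_subst :: "fvb_gen \<Rightarrow> fvb_gen word" where
  "pi_subst g = (case g of Sig i \<Rightarrow> [(Sig i, True)] | Rho i \<Rightarrow> [(Sig i, True)])"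

definition nu_subst :: "fvb_gen \<Rightarrow> fvb_gen word" where
  "nu_subst g = (case g of Sig i \<Rightarrow> [] | Rho i \<Rightarrow> [(Rho i, True)])"

definition projection_cert :: "((bool \<times> nat) \<times> (fvb_gen word \<times> nat \<times> bool) list) list" where
  "projection_cert = [((True, 0), [([], 0, True)]),
    ((True, 1), [([], 0, True)]),
    ((True, 2), [([], 2, True)]),
    ((True, 3), [([], 2, True)]),
    ((True, 4), [([], 4, True)]),
    ((True, 5), [([], 4, True)]),
    ((True, 6), [([], 4, True)]),
    ((False, 1), [([], 1, True)]),
    ((False, 3), [([], 3, True)]),
    ((False, 5), [([], 5, True)])]"

text \<open>The flag k selects the copy of S3 in FVB 3: the one generated by the Sig i if k, the
  one generated by the Rho i otherwise.\<close>

definition s3_normal_word :: "bool \<Rightarrow> s3 \<Rightarrow> fvb_gen word" where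
  "s3_normal_word k p = map (\<lambda>i. (if k then Sig i else Rho i, True)) (s3_normal_form p)"

definition normal_form_cert :: "((bool \<times> s3 \<times> nat \<times> bool) \<times> (fvb_gen word \<times> nat \<times> bool) list) list" where
  "normal_form_cert = [((True, E0, 1, False), [([], 0, False)]),
    ((True, E0, 2, False), [([], 2, False)]),
    ((True, E1, 1, True), [([], 0, True)]),
    ((True, E1, 2, False), [([(Sig 1, True)], 2, False)]),
    ((True, E2, 1, False), [([(Sig 2, True)], 0, False)]),
    ((True, E2, 2, True), [([], 2, True)]),
    ((True, E3, 1, False), [([(Sig 1, True), (Sig 2, True)], 0, False)]),
    ((True, E3, 2, True), [([(Sig 1, True)], 2, True)]),
    ((True, E4, 1, True), [([(Sig 2, True)], 0, True)]),
    ((True, E4, 2, True), [([], 4, False)]),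
    ((True, E4, 2, False), [([(Sig 2, True), (Sig 1, True), (Sig 2, False), (Sig 1, False), (Sig 2, False)], 0, False), ([(Sig 2, True), (Sig 1, True), (Sig 2, False), (Sig 1, False), (Sig 2, False)], 4, True)]),
    ((True, E5, 1, True), [([(Sig 1, True), (Sig 2, True)], 0, True)]),
    ((True, E5, 2, True), [([], 0, True), ([(Sig 1, False)], 4, False)]),
    ((True, E5, 2, False), [([], 4, True)]),
    ((False, E0, 1, False), [([], 1, False)]),
    ((False, E0, 2, False), [([], 3, False)]),
    ((False, E1, 1, True), [([], 1, True)]),
    ((False, E1, 2, False), [([(Rho 1, True)], 3, False)]),
    ((False, E2, 1, False), [([(Rho 2, True)], 1, False)]),
    ((False, E2, 2, True), [([], 3, True)]),
    ((False, E3, 1, False), [([(Rho 1, True), (Rho 2, True)], 1, False)]),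
    ((False, E3, 2, True), [([(Rho 1, True)], 3, True)]),
    ((False, E4, 1, True), [([(Rho 2, True)], 1, True)]),
    ((False, E4, 2, True), [([], 5, False)]),
    ((False, E4, 2, False), [([(Rho 2, True), (Rho 1, True), (Rho 2, False), (Rho 1, False), (Rho 2, False)], 1, False), ([(Rho 2, True), (Rho 1, True), (Rho 2, False), (Rho 1, False), (Rho 2, False)], 5, True)]),
    ((False, E5, 1, True), [([(Rho 1, True), (Rho 2, True)], 1, True)]),
    ((False, E5, 2, True), [([], 1, True), ([(Rho 1, False)], 5, False)]),
    ((False, E5, 2, False), [([], 5, True)])]"

definition relators_fix_cosets_check :: bool where
  "relators_fix_cosets_check \<longleftrightarrow>
     list_all (\<lambda>c. list_all (\<lambda>r. coset_act_word c r = c) fvb3_rel_list) all_cosets"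

definition transversal_check :: bool where
  "transversal_check \<longleftrightarrow> list_all (\<lambda>c. is_fvb3_word (transversal c) \<and>
     coset_act_word (E0, E0) (transversal c) = c \<and> rs_target (E0, E0) (transversal c) = [] \<and>
     rs_target c (winv (transversal c)) = []) all_cosets"

definition elim_step_check :: "schreier_index \<Rightarrow> s3 \<times> s3 \<Rightarrow> nat \<Rightarrow> nat \<Rightarrow> bool" where
  "elim_step_check s c j k \<longleftrightarrow> (let w = rs_rewrite c (fvb3_rel_list ! j) in
     j < 7 \<and> k < length w \<and> fst (w ! k) = s \<and>
     list_all (\<lambda>x. elim_rank (fst x) < elim_rank s) (take k w @ drop (Suc k) w) \<and>
     free_reduce (if snd (w ! k) then schreier_roundtrip s else winv (schreier_roundtrip s)) =
       free_reduce (winv (subst_word schreier_roundtrip (take k w)) @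
                    winv (subst_word schreier_roundtrip (drop (Suc k) w))))"

definition schreier_index_check :: "schreier_index \<Rightarrow> bool" where
  "schreier_index_check s \<longleftrightarrow> is_tgt_word (schreier_to_target s) \<and>
     (case s of (c, h) \<Rightarrow> (case elimination s of
        Tree_edge \<Rightarrow> schreier_to_target s = [] \<and>
          transversal (coset_act c (gen_of_letter h)) = transversal c @ [(gen_of_letter h, True)]
      | Kept \<Rightarrow> free_reduce (schreier_roundtrip s) = [(s, True)]
      | Eliminated r c' j k \<Rightarrow> elim_step_check s c' j k))"

definition rewritten_relators_check :: bool where
  "rewritten_relators_check \<longleftrightarrow> list_all (\<lambda>c. list_all (\<lambda>j.
     certifies is_tgt_word tgt_rel_list (cert_lookup rewritten_relator_cert (c, j))
       (rs_target c (fvb3_rel_list ! j))) [0..<7]) all_cosets"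

definition target_gens_check :: bool where
  "target_gens_check \<longleftrightarrow> list_all (\<lambda>a.
     certifies is_tgt_word tgt_rel_list (cert_lookup target_gen_cert a)
       (subst_word schreier_to_target (target_to_schreier a) @ [(a, False)])) tgt_gen_list"

definition target_relators_check :: bool where
  "target_relators_check \<longleftrightarrow> list_all (\<lambda>i.
     free_reduce (subst_word target_to_schreier (tgt_rel_list ! i)) =
       free_reduce (relator_product (map (\<lambda>(w, (c, j), s).
         (w, subst_word target_to_schreier (rs_target c (fvb3_rel_list ! j)), s))
         (cert_lookup target_relator_cert i))) \<and>
     list_all (\<lambda>(w, (c, j), s). j < 7) (cert_lookup target_relator_cert i)) [0..<4]"

definition projections_check :: bool where
  "projections_check \<longleftrightarrow> list_all (\<lambda>k. list_all (\<lambda>j.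
     certifies is_fvb3_word fvb3_rel_list (cert_lookup projection_cert (k, j))
       (subst_word (if k then pi_subst else nu_subst) (fvb3_rel_list ! j))) [0..<7]) [True, False]"

definition normal_form_check :: bool where
  "normal_form_check \<longleftrightarrow> list_all (\<lambda>k. list_all (\<lambda>p. list_all (\<lambda>i. list_all (\<lambda>b.
     certifies is_fvb3_word fvb3_rel_list (cert_lookup normal_form_cert (k, p, i, b))
       (s3_normal_word k p @ [(if k then Sig i else Rho i, b)] @ winv (s3_normal_word k (s3_mult p (s3_gen i)))))
     [True, False]) [1, 2]) all_s3) [True, False]"

lemma fvb3_rel_list_eq: "fvb3_rel_list =
  [[(Sig 1, True), (Sig 1, True)], [(Rho 1, True), (Rho 1, True)],
   [(Sig 2, True), (Sig 2, True)], [(Rho 2, True), (Rho 2, True)],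
   [(Sig 1, True), (Sig 2, True), (Sig 1, True), (Sig 2, False), (Sig 1, False), (Sig 2, False)],
   [(Rho 1, True), (Rho 2, True), (Rho 1, True), (Rho 2, False), (Rho 1, False), (Rho 2, False)],
   [(Rho 1, True), (Rho 2, True), (Sig 1, True), (Rho 2, False), (Rho 1, False), (Sig 2, False)]]"
  by (simp add: fvb3_rel_list_def relation_def gen_def winv_def)

lemma tgt_rel_list_eq: "tgt_rel_list =
  [[(Ta, True), (Tb, True), (Ta, False), (Tb, False)],
   [(Tx, True), (Ty, True), (Tv, False), (Tu, False)],
   [(Tv, True), (Tu, True), (Tq, False), (Tp, False)],
   [(Tq, True), (Tp, True), (Tx, False), (Ty, False)]]"
  by (simp add: tgt_rel_list_def relation_def gen_def winv_def)

lemmas certificate_defs = certifies_def fvb3_rel_list_eq tgt_rel_list_eq all_s3_def all_cosets_def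
  all_schreier_indices_def all_letters_def fvb3_gen_list_def tgt_gen_list_def is_fvb3_word_def is_tgt_word_def
  s3_mult_def s3_gen_def letter_of_def gen_of_letter_def coset_act_letter_def coset_act_def
  coset_act_word_def transversal_def schreier_to_target_def target_to_schreier_def rs_target_def
  schreier_roundtrip_def elimination_def elim_rank_def free_reduce_def cert_lookup_def
  rewritten_relator_cert_def target_gen_cert_def target_relator_cert_def projection_cert_def
  pi_subst_def nu_subst_def s3_normal_word_def s3_normal_form_def normal_form_cert_def upt_rec

lemma relators_fix_cosets_checked: relators_fix_cosets_check
  unfolding relators_fix_cosets_check_def by (simp add: certificate_defs)

lemma transversal_checked: transversal_check
  unfolding transversal_check_def by (simp add: certificate_defs)

lemma schreier_indices_checked: "list_all schreier_index_check all_schreier_indices"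
  unfolding schreier_index_check_def elim_step_check_def by (simp add: certificate_defs)

lemma rewritten_relators_checked: rewritten_relators_check
  unfolding rewritten_relators_check_def by (simp add: certificate_defs)

lemma target_gens_checked: target_gens_check
  unfolding target_gens_check_def by (simp add: certificate_defs)

lemma target_relators_checked: target_relators_check
  unfolding target_relators_check_def by (simp add: certificate_defs)

lemma projections_checked: projections_check
  unfolding projections_check_def by (simp add: certificate_defs)

lemma normal_form_checked: normal_form_check
  unfolding normal_form_check_def by (simp add: certificate_defs)

abbreviation "A3 \<equiv> fvb_gens 3"
abbreviation "R3 \<equiv> fvb_rels 3"
abbreviation "AT \<equiv> tgt_gens"
abbreviation "RT \<equiv> tgt_rels"
abbreviation "PF \<equiv> presented_group A3 R3"
abbreviation "PT \<equiv> presented_group AT RT"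

interpretation PF: group PF by (rule group_presented_group)

lemma A3_eq: "A3 = set fvb3_gen_list"
  unfolding fvb_gens_def fvb3_gen_list_def by (auto simp: le_Suc_eq numeral_eq_Suc)

lemma R3_eq: "R3 = set fvb3_rel_list"
  unfolding fvb_rels_def fvb3_rel_list_def by (auto simp: le_Suc_eq numeral_eq_Suc)

lemma AT_eq: "AT = set tgt_gen_list"
  by (simp add: tgt_gens_def tgt_gen_list_def)

lemma RT_eq: "RT = set tgt_rel_list"
  by (simp add: tgt_rels_def tgt_rel_list_def)

lemma is_fvb3_word_iff: "is_fvb3_word w \<longleftrightarrow> w \<in> words A3"
  by (auto simp: is_fvb3_word_def A3_eq words_def list_all_iff)

lemma is_tgt_word_iff: "is_tgt_word w \<longleftrightarrow> w \<in> words AT"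
  by (auto simp: is_tgt_word_def AT_eq words_def list_all_iff)

lemma fvb3_rel_list_words: "set fvb3_rel_list \<subseteq> words A3"
  by (auto simp: fvb3_rel_list_eq A3_eq fvb3_gen_list_def)

lemma tgt_rel_list_words: "set tgt_rel_list \<subseteq> words AT"
  by (auto simp: tgt_rel_list_eq AT_eq tgt_gen_list_def)

lemma R3_words: "r \<in> R3 \<Longrightarrow> r \<in> words A3"
  using fvb3_rel_list_words R3_eq by blast

lemma length_fvb3_rel_list: "length fvb3_rel_list = 7"
  by (simp add: fvb3_rel_list_def)

lemma length_tgt_rel_list: "length tgt_rel_list = 4"
  by (simp add: tgt_rel_list_def)

lemma R3_nth:
  assumes "r \<in> R3"
  obtains j where "j < 7" "r = fvb3_rel_list ! j"
  using assms length_fvb3_rel_list by (auto simp: R3_eq in_set_conv_nth)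

lemma in_all_s3: "p \<in> set all_s3"
  by (cases p) (simp_all add: all_s3_def)

lemma in_all_cosets: "c \<in> set all_cosets"
  unfolding all_cosets_def set_product using in_all_s3 by (cases c) blast

lemma in_all_letters: "h \<in> set all_letters"
  by (cases h) (simp_all add: all_letters_def)

lemma in_all_schreier_indices: "s \<in> set all_schreier_indices"
  using in_all_cosets[of "fst s"] in_all_letters[of "snd s"]
  by (simp add: all_schreier_indices_def mem_Times_iff)

lemma coset_act_letter_twice[simp]: "coset_act_letter (coset_act_letter c h) h = c"
  by (cases c; rename_tac p q; case_tac p; case_tac q; case_tac h)
     (simp_all add: coset_act_letter_def s3_mult_def s3_gen_def)

lemma coset_act_twice[simp]: "coset_act (coset_act c g) g = c"
  by (simp add: coset_act_def)

lemma letter_of_gen_of_letter[simp]: "letter_of (gen_of_letter h) = h"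
  by (cases h) (simp_all add: letter_of_def gen_of_letter_def)

lemma gen_of_letter_in_A3[simp]: "gen_of_letter h \<in> A3"
  by (cases h) (simp_all add: gen_of_letter_def A3_eq fvb3_gen_list_def)

lemma gen_of_letter_of: "g \<in> A3 \<Longrightarrow> gen_of_letter (letter_of g) = g"
  by (auto simp: A3_eq fvb3_gen_list_def letter_of_def gen_of_letter_def)

lemma coset_act_word_Nil[simp]: "coset_act_word c [] = c"
  by (simp add: coset_act_word_def)

lemma coset_act_word_Cons[simp]: "coset_act_word c (x # w) = coset_act_word (coset_act c (fst x)) w"
  by (simp add: coset_act_word_def)

lemma coset_act_word_append[simp]:
  "coset_act_word c (u @ v) = coset_act_word (coset_act_word c u) v"
  by (simp add: coset_act_word_def)

lemma coset_act_word_winv[simp]: "coset_act_word (coset_act_word c w) (winv w) = c"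
  by (induction w arbitrary: c) auto

lemma coset_act_word_relator: "r \<in> R3 \<Longrightarrow> coset_act_word c r = c"
  using relators_fix_cosets_checked in_all_cosets[of c]
  by (auto simp: relators_fix_cosets_check_def list_all_iff R3_eq)

lemma coset_act_word_pres_eq: "pres_eq A3 R3 u v \<Longrightarrow> coset_act_word c u = coset_act_word c v"
proof (induction arbitrary: c rule: pres_eq.induct)
  case (relator u v r) then show ?case by (simp add: coset_act_word_relator)
qed auto

section \<open>X3 as the stabiliser of the trivial coset\<close>

definition projection_subst :: "bool \<Rightarrow> fvb_gen \<Rightarrow> fvb_gen word" where
  "projection_subst k = (if k then pi_subst else nu_subst)"

definition coset_component :: "bool \<Rightarrow> s3 \<times> s3 \<Rightarrow> s3" where
  "coset_component k c = (if k then fst c else snd c)"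

definition component_gen :: "bool \<Rightarrow> nat \<Rightarrow> fvb_gen" where
  "component_gen k i = (if k then Sig i else Rho i)"

definition X3 :: "fvb_gen word set set" where
  "X3 = pres_class A3 R3 ` {w \<in> words A3. coset_act_word (E0, E0) w = (E0, E0)}"

lemma projection_subst_words: "g \<in> A3 \<Longrightarrow> projection_subst k g \<in> words A3"
  by (cases k) (auto simp: A3_eq fvb3_gen_list_def projection_subst_def pi_subst_def nu_subst_def)

lemma subst_projection_subst_words: "w \<in> words A3 \<Longrightarrow> subst_word (projection_subst k) w \<in> words A3"
  by (rule subst_word_words, rule projection_subst_words) (auto simp: words_def)

lemma projection_subst_relator:
  assumes "r \<in> R3"
  shows "pres_eq A3 R3 (subst_word (projection_subst k) r) []"
proof -
  obtain j where j: "j < 7" "r = fvb3_rel_list ! j" using assms by (rule R3_nth)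
  have "certifies is_fvb3_word fvb3_rel_list (cert_lookup projection_cert (k, j))
      (subst_word (projection_subst k) r)"
    using projections_checked j
      by (cases k) (auto simp: projections_check_def projection_subst_def list_all_iff)
  then show ?thesis
    by (rule pres_eq_trivial_if_certifies)
       (use assms in \<open>auto simp: is_fvb3_word_iff R3_eq fvb3_rel_list_words subst_projection_subst_words R3_words\<close>)
qed

lemma projection_subst_respects:
  "\<forall>g\<in>A3. projection_subst k g \<in> words A3"
  "\<forall>r\<in>R3. r \<in> words A3 \<longrightarrow> pres_eq A3 R3 (subst_word (projection_subst k) r) []"
  using projection_subst_words projection_subst_relator by auto

lemma fvb_pi_3_eq: "fvb_pi 3 = pres_lift PF (\<lambda>g. pres_class A3 R3 (projection_subst True g))"
proof -
  have "(\<lambda>g. case g of Sig i \<Rightarrow> pres_class A3 R3 (gen (Sig i)) | Rho i \<Rightarrow> pres_class A3 R3 (gen (Sig i)))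
     = (\<lambda>g. pres_class A3 R3 (projection_subst True g))"
    by (rule ext, case_tac g) (simp_all add: projection_subst_def pi_subst_def gen_def)
  then show ?thesis by (simp add: fvb_pi_def FVB_def)
qed

lemma fvb_nu_3_eq: "fvb_nu 3 = pres_lift PF (\<lambda>g. pres_class A3 R3 (projection_subst False g))"
proof -
  have "(\<lambda>g. case g of Sig i \<Rightarrow> \<one>\<^bsub>FVB 3\<^esub> | Rho i \<Rightarrow> pres_class A3 R3 (gen (Rho i)))
     = (\<lambda>g. pres_class A3 R3 (projection_subst False g))"
    by (rule ext, case_tac g) (simp_all add: projection_subst_def nu_subst_def gen_def one_presented_group FVB_def)
  then show ?thesis by (simp add: fvb_nu_def FVB_def)
qed

lemma fvb_pi_3_hom: "fvb_pi 3 \<in> hom (FVB 3) (FVB 3)"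
  unfolding fvb_pi_3_eq FVB_def
    by (rule PF.pres_lift_hom[OF respects_relators_subst[OF projection_subst_respects]])

lemma fvb_nu_3_hom: "fvb_nu 3 \<in> hom (FVB 3) (FVB 3)"
  unfolding fvb_nu_3_eq FVB_def
    by (rule PF.pres_lift_hom[OF respects_relators_subst[OF projection_subst_respects]])

lemma s3_normal_word_words: "s3_normal_word k p \<in> words A3"
  by (cases k; cases p) (auto simp: s3_normal_word_def s3_normal_form_def A3_eq fvb3_gen_list_def)

lemma coset_component_s3_normal_word: "coset_component k (coset_act_word (E0, E0) (s3_normal_word k p)) = p"
  by (cases k; cases p) (simp_all add: s3_normal_word_def s3_normal_form_def coset_component_def
      coset_act_def coset_act_letter_def letter_of_def s3_mult_def s3_gen_def)

lemma s3_normal_word_E0: "s3_normal_word k E0 = []"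
  by (simp add: s3_normal_word_def s3_normal_form_def)

lemma s3_normal_word_step:
  assumes i: "i = 1 \<or> i = 2"
  shows "pres_eq A3 R3 (s3_normal_word k p @ [(component_gen k i, b)]) (s3_normal_word k (s3_mult p (s3_gen i)))"
proof (rule pres_eq_of_trivial_quotient)
  have letter: "[(component_gen k i, b)] \<in> words A3"
    using i by (cases k) (auto simp: component_gen_def A3_eq fvb3_gen_list_def)
  have "certifies is_fvb3_word fvb3_rel_list (cert_lookup normal_form_cert (k, p, i, b))
      ((s3_normal_word k p @ [(component_gen k i, b)]) @ winv (s3_normal_word k (s3_mult p (s3_gen i))))"
    using normal_form_checked in_all_s3[of p] i
    unfolding normal_form_check_def list_all_iff by (cases k; cases b) (auto simp: component_gen_def)
  then show "pres_eq A3 R3 ((s3_normal_word k p @ [(component_gen k i, b)]) @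
      winv (s3_normal_word k (s3_mult p (s3_gen i)))) []"
    by (rule pres_eq_trivial_if_certifies)
       (use letter in \<open>auto simp: is_fvb3_word_iff R3_eq fvb3_rel_list_words s3_normal_word_words\<close>)
  show "s3_normal_word k p @ [(component_gen k i, b)] \<in> words A3"
    using letter s3_normal_word_words by simp
qed (rule s3_normal_word_words)

lemma coset_component_act:
  "i = 1 \<or> i = 2 \<Longrightarrow> coset_component k (coset_act c (component_gen k i))
      = s3_mult (coset_component k c) (s3_gen i)"
  by (cases c, cases k) (auto simp: coset_component_def component_gen_def coset_act_def coset_act_letter_def letter_of_def)

lemma coset_component_act_cong:
  "coset_component k c = coset_component k c' \<Longrightarrow>
   coset_component k (coset_act c g) = coset_component k (coset_act c' g)"
  by (cases c, cases c', cases k; cases "letter_of g") (auto simp: coset_component_def coset_act_def coset_act_letter_def)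

lemma coset_component_act_word_cong:
  "coset_component k c = coset_component k c' \<Longrightarrow>
   coset_component k (coset_act_word c w) = coset_component k (coset_act_word c' w)"
proof (induction w arbitrary: c c')
  case (Cons x w)
  show ?case using Cons.IH[OF coset_component_act_cong[OF Cons.prems]] by simp
qed simp

lemma pres_class_s3_normal_word:
  assumes "\<forall>x\<in>set v. fst x = component_gen k 1 \<or> fst x = component_gen k 2"
  shows "pres_class A3 R3 v = pres_class A3 R3 (s3_normal_word k (coset_component k (coset_act_word (E0, E0) v)))"
  using assms
proof (induction v rule: rev_induct)
  case Nil then show ?case by (simp add: coset_component_def s3_normal_word_E0)
next
  case (snoc x v)
  obtain g b where x: "x = (g, b)" by fastforce
  obtain i where i: "i = 1 \<or> i = 2" "g = component_gen k i" using snoc.prems x by auto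
  have vw: "v \<in> words A3"
    using snoc.prems by (cases k) (auto simp: words_def component_gen_def A3_eq fvb3_gen_list_def)
  have xw: "[x] \<in> words A3" using i x by (cases k) (auto simp: component_gen_def A3_eq fvb3_gen_list_def)
  let ?p = "coset_component k (coset_act_word (E0, E0) v)"
  have "pres_class A3 R3 (v @ [x]) = pres_class A3 R3 v \<otimes>\<^bsub>PF\<^esub> pres_class A3 R3 [x]"
    using vw xw by (simp add: mult_presented_group)
  also have "\<dots> = pres_class A3 R3 (s3_normal_word k ?p @ [x])"
    using snoc vw xw s3_normal_word_words by (simp add: mult_presented_group)
  also have "\<dots> = pres_class A3 R3 (s3_normal_word k (s3_mult ?p (s3_gen i)))"
    using s3_normal_word_step[OF i(1), of k ?p b] x i xw s3_normal_word_words
      by (simp add: pres_class_eq_iff)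
  also have "s3_mult ?p (s3_gen i) = coset_component k (coset_act_word (E0, E0) (v @ [x]))"
    using coset_component_act[OF i(1), of k "coset_act_word (E0, E0) v"] x i by simp
  finally show ?case .
qed

lemma coset_component_subst:
  assumes "w \<in> words A3"
  shows "coset_component k (coset_act_word c (subst_word (projection_subst k) w)) =
    coset_component k (coset_act_word c w)"
  using assms
proof (induction w arbitrary: c)
  case (Cons x w)
  obtain g b where x: "x = (g, b)" by fastforce
  have g: "g \<in> A3" "w \<in> words A3" using Cons.prems x by auto
  let ?u = "subst_word (projection_subst k) [(g, b)]"
  have step: "coset_component k (coset_act_word c ?u) = coset_component k (coset_act c g)"
  proof -
    have "g = Sig 1 \<or> g = Sig 2 \<or> g = Rho 1 \<or> g = Rho 2" using g(1) by (simp add: A3_eq fvb3_gen_list_def)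
    moreover obtain p q where "c = (p, q)" by fastforce
    ultimately show ?thesis
      by (cases k; cases b; elim disjE)
         (simp_all add: projection_subst_def pi_subst_def nu_subst_def coset_component_def coset_act_def
           coset_act_letter_def letter_of_def)
  qed
  have "subst_word (projection_subst k) (x # w) = ?u @ subst_word (projection_subst k) w"
    using x by simp
  then have "coset_component k (coset_act_word c (subst_word (projection_subst k) (x # w))) =
      coset_component k (coset_act_word (coset_act_word c ?u) (subst_word (projection_subst k) w))"
    by (simp only: coset_act_word_append)
  also have "\<dots> = coset_component k (coset_act_word (coset_act c g) (subst_word (projection_subst k) w))"
    by (rule coset_component_act_word_cong[OF step])
  also have "\<dots> = coset_component k (coset_act_word c (x # w))"
    using Cons.IH[OF g(2)] x by simp
  finally show ?case .
qed simp

lemma subst_projection_subst_letters: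
  "w \<in> words A3 \<Longrightarrow>
    \<forall>x\<in>set (subst_word (projection_subst k) w). fst x = component_gen k 1 \<or> fst x = component_gen k 2"
proof
  fix x assume w: "w \<in> words A3" and x: "x \<in> set (subst_word (projection_subst k) w)"
  then obtain y where y: "y \<in> set w" "fst x \<in> fst ` set (projection_subst k (fst y))"
    using fst_set_subst_word[of "projection_subst k" w] by blast
  have "fst y \<in> {Sig 1, Sig 2, Rho 1, Rho 2}" using w y(1) by (auto simp: words_def A3_eq fvb3_gen_list_def)
  then show "fst x = component_gen k 1 \<or> fst x = component_gen k 2" using y(2)
    by (cases k) (auto simp: projection_subst_def pi_subst_def nu_subst_def component_gen_def)
qed

lemma projection_trivial_iff:
  assumes w: "w \<in> words A3"
  shows "pres_class A3 R3 (subst_word (projection_subst k) w) = pres_class A3 R3 [] \<longleftrightarrow>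
    coset_component k (coset_act_word (E0, E0) w) = E0"
proof -
  let ?p = "coset_component k (coset_act_word (E0, E0) w)"
  have e: "pres_class A3 R3 (subst_word (projection_subst k) w) = pres_class A3 R3 (s3_normal_word k ?p)"
    using pres_class_s3_normal_word[OF subst_projection_subst_letters[OF w]] coset_component_subst[OF w]
      by simp
  show ?thesis
  proof
    assume "pres_class A3 R3 (subst_word (projection_subst k) w) = pres_class A3 R3 []"
    then have "pres_eq A3 R3 (s3_normal_word k ?p) []"
      using e s3_normal_word_words by (simp add: pres_class_eq_iff)
    then have "coset_act_word (E0, E0) (s3_normal_word k ?p) = (E0, E0)"
      using coset_act_word_pres_eq by fastforce
    then have "coset_component k (coset_act_word (E0, E0) (s3_normal_word k ?p)) = E0"
      by (simp add: coset_component_def)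
    then show "?p = E0" by (simp only: coset_component_s3_normal_word)
  qed (use e in \<open>simp add: s3_normal_word_E0\<close>)
qed

lemma FVP_Int_FVK_eq_X3: "FVP 3 \<inter> FVK 3 = X3"
proof -
  have proj: "fvb_pi 3 (pres_class A3 R3 w) = \<one>\<^bsub>PF\<^esub> \<and> fvb_nu 3 (pres_class A3 R3 w) = \<one>\<^bsub>PF\<^esub> \<longleftrightarrow>
      coset_act_word (E0, E0) w = (E0, E0)" if w: "w \<in> words A3" for w
    using projection_trivial_iff[OF w, of True] projection_trivial_iff[OF w, of False]
      pres_lift_subst_pres_class[OF projection_subst_respects w]
    by (simp add: fvb_pi_3_eq fvb_nu_3_eq one_presented_group coset_component_def prod_eq_iff)
  show ?thesis
    unfolding FVP_def FVK_def kernel_def X3_def FVB_def carrier_presented_group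
    using proj by auto
qed

lemma subgroup_X3: "subgroup X3 PF"
proof -
  have "subgroup (FVP 3) PF" "subgroup (FVK 3) PF"
    unfolding FVP_def FVK_def using fvb_pi_3_hom fvb_nu_3_hom
    by (auto intro!: group_hom.subgroup_kernel simp: group_hom_def group_hom_axioms_def FVB_def)
  then show ?thesis using PF.subgroups_Inter_pair FVP_Int_FVK_eq_X3 by metis
qed

section \<open>Reidemeister-Schreier rewriting into the target\<close>

lemma schreier_index_checked: "schreier_index_check s"
  using schreier_indices_checked in_all_schreier_indices[of s] by (simp add: list_all_iff)

lemma transversal_props:
  "is_fvb3_word (transversal c) \<and> coset_act_word (E0, E0) (transversal c) = c \<and>
   rs_target (E0, E0) (transversal c) = [] \<and> rs_target c (winv (transversal c)) = []"
  using transversal_checked in_all_cosets[of c] unfolding transversal_check_def list_all_iff by blast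

lemma transversal_words: "transversal c \<in> words A3"
  using transversal_props is_fvb3_word_iff by blast

lemma coset_act_transversal: "coset_act_word (E0, E0) (transversal c) = c"
  using transversal_props by blast

lemma rs_target_transversal: "rs_target (E0, E0) (transversal c) = []"
  using transversal_props by blast

lemma rs_target_winv_transversal: "rs_target c (winv (transversal c)) = []"
  using transversal_props by blast

lemma transversal_E0: "transversal (E0, E0) = []"
  by (simp add: transversal_def)

lemma rs_rewrite_append[simp]: "rs_rewrite c (u @ v) = rs_rewrite c u @ rs_rewrite (coset_act_word c u) v"
  by (induction c u rule: rs_rewrite.induct) auto

lemma rs_target_append[simp]: "rs_target c (u @ v) = rs_target c u @ rs_target (coset_act_word c u) v"
  by (simp add: rs_target_def)

lemma schreier_to_target_words: "schreier_to_target s \<in> words AT"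
  using schreier_index_checked[of s] by (simp add: schreier_index_check_def is_tgt_word_iff)

lemma subst_schreier_to_target_words: "subst_word schreier_to_target w \<in> words AT"
  by (rule subst_word_words) (simp add: schreier_to_target_words)

lemma rs_target_words: "rs_target c w \<in> words AT"
  by (simp add: rs_target_def subst_schreier_to_target_words)

lemma rs_target_relator:
  assumes "r \<in> R3"
  shows "pres_eq AT RT (rs_target c r) []"
proof -
  obtain j where j: "j < 7" "r = fvb3_rel_list ! j" using assms by (rule R3_nth)
  have "certifies is_tgt_word tgt_rel_list (cert_lookup rewritten_relator_cert (c, j)) (rs_target c r)"
    using rewritten_relators_checked in_all_cosets[of c] j
    unfolding rewritten_relators_check_def list_all_iff by simp
  then show ?thesis
    by (rule pres_eq_trivial_if_certifies) (auto simp: is_tgt_word_iff RT_eq tgt_rel_list_words rs_target_words)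
qed

lemma rs_target_pres_eq: "pres_eq A3 R3 u v \<Longrightarrow> pres_eq AT RT (rs_target c u) (rs_target c v)"
proof (induction arbitrary: c rule: pres_eq.induct)
  case (refl w) then show ?case by (simp add: pres_eq.refl rs_target_words)
next
  case (sym u v) then show ?case by (blast intro: pres_eq.sym)
next
  case (trans u v w) then show ?case by (blast intro: pres_eq.trans)
next
  case (cancel u v g b)
  let ?c = "coset_act_word c u"
  have "pres_eq AT RT (rs_target ?c [(g, b), (g, \<not> b)]) []"
    using pres_eq_cancel_word[OF schreier_to_target_words[of "(?c, letter_of g)"], of RT]
      pres_eq_winv_cancel_word[OF schreier_to_target_words[of "(coset_act ?c g, letter_of g)"], of RT]
    by (cases b) (simp_all add: rs_target_def)
  then show ?case using pres_eq_delete_trivial[of AT RT "rs_target ?c [(g, b), (g, \<not> b)]"]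
    rs_target_append[of ?c "[(g, b), (g, \<not> b)]" v] rs_target_words by simp
next
  case (relator u v r)
  then show ?case using pres_eq_delete_trivial[OF rs_target_relator[OF relator(3)]] rs_target_words
    by (simp add: coset_act_word_relator)
qed

definition rs_hom :: "fvb_gen word set \<Rightarrow> tgt_gen word set" where
  "rs_hom x = pres_class AT RT (rs_target (E0, E0) (SOME w. w \<in> x))"

lemma rs_hom_pres_class: "w \<in> words A3 \<Longrightarrow>
    rs_hom (pres_class A3 R3 w) = pres_class AT RT (rs_target (E0, E0) w)"
  unfolding rs_hom_def using rs_target_pres_eq[OF pres_eq_some_in_class[of w A3 R3], of "(E0, E0)"]
  by (subst pres_class_eq_iff) (auto simp: rs_target_words intro: pres_eq.sym)

lemma rs_hom_hom: "rs_hom \<in> hom (PF\<lparr>carrier := X3\<rparr>) PT"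
proof (rule homI)
  fix x assume "x \<in> carrier (PF\<lparr>carrier := X3\<rparr>)"
  then obtain w where "w \<in> words A3" "x = pres_class A3 R3 w" by (auto simp: X3_def)
  then show "rs_hom x \<in> carrier PT" by (simp add: rs_hom_pres_class rs_target_words pres_class_in_carrier)
next
  fix x y assume "x \<in> carrier (PF\<lparr>carrier := X3\<rparr>)" "y \<in> carrier (PF\<lparr>carrier := X3\<rparr>)"
  then obtain u v where "u \<in> words A3" "x = pres_class A3 R3 u" "coset_act_word (E0, E0) u = (E0, E0)"
    "v \<in> words A3" "y = pres_class A3 R3 v" by (auto simp: X3_def)
  then show "rs_hom (x \<otimes>\<^bsub>PF\<lparr>carrier := X3\<rparr>\<^esub> y) = rs_hom x \<otimes>\<^bsub>PT\<^esub> rs_hom y"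
    by (simp add: mult_presented_group rs_hom_pres_class rs_target_words)
qed

definition schreier_word :: "schreier_index \<Rightarrow> fvb_gen word" where
  "schreier_word s = (case s of (c, h) \<Rightarrow>
     transversal c @ [(gen_of_letter h, True)] @ winv (transversal (coset_act c (gen_of_letter h))))"

definition schreier_elem :: "schreier_index \<Rightarrow> fvb_gen word set" where
  "schreier_elem s = pres_class A3 R3 (schreier_word s)"

lemma schreier_word_words: "schreier_word s \<in> words A3"
  by (cases s) (simp add: schreier_word_def transversal_words)

lemma schreier_elem_carrier[simp]: "schreier_elem s \<in> carrier PF"
  by (simp add: schreier_elem_def schreier_word_words pres_class_in_carrier)

lemma letters_in_schreier_elem[simp]: "letters_in PF schreier_elem w"
  by (simp add: letters_in_def)

lemma coset_act_schreier_word: "coset_act_word (E0, E0) (schreier_word s) = (E0, E0)"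
proof -
  obtain c h where s: "s = (c, h)" by fastforce
  let ?d = "coset_act c (gen_of_letter h)"
  show ?thesis
    using coset_act_word_winv[of "(E0, E0)" "transversal ?d"] coset_act_transversal[of ?d]
      coset_act_transversal[of c] s
    by (simp add: schreier_word_def)
qed

lemma schreier_elem_X3: "schreier_elem s \<in> X3"
  unfolding schreier_elem_def X3_def using schreier_word_words coset_act_schreier_word by blast

lemma pres_class_cancel_middle: "x \<in> words A3 \<Longrightarrow> t \<in> words A3 \<Longrightarrow> y \<in> words A3 \<Longrightarrow>
  pres_class A3 R3 (x @ winv t @ t @ y) = pres_class A3 R3 (x @ y)"
  using pres_eq_delete_trivial[OF pres_eq_winv_cancel_word[of t A3 R3], of x y]
    by (simp add: pres_class_eq_iff)

lemma eval_rs_rewrite: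
  "w \<in> words A3 \<Longrightarrow> eval_word PF schreier_elem (rs_rewrite c w) =
     pres_class A3 R3 (transversal c @ w @ winv (transversal (coset_act_word c w)))"
proof (induction w arbitrary: c)
  case Nil
  have "pres_class A3 R3 (transversal c @ winv (transversal c)) = pres_class A3 R3 []"
    using pres_eq_cancel_word[OF transversal_words[of c], of R3]
      by (simp add: pres_class_eq_iff transversal_words)
  then show ?case by (simp add: one_presented_group)
next
  case (Cons x w)
  obtain g b where x: "x = (g, b)" by fastforce
  have g: "g \<in> A3" "w \<in> words A3" using Cons.prems x by auto
  let ?d = "coset_act c g"
  have first: "(if b then schreier_elem (c, letter_of g) else inv\<^bsub>PF\<^esub> (schreier_elem (?d, letter_of g))) =
     pres_class A3 R3 (transversal c @ [(g, b)] @ winv (transversal ?d))"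
    using g(1) by (cases b)
      (simp_all add: schreier_elem_def schreier_word_def gen_of_letter_of inv_presented_group transversal_words)
  have "eval_word PF schreier_elem (rs_rewrite c (x # w)) =
      (if b then schreier_elem (c, letter_of g) else inv\<^bsub>PF\<^esub> (schreier_elem (?d, letter_of g))) \<otimes>\<^bsub>PF\<^esub>
      eval_word PF schreier_elem (rs_rewrite ?d w)"
    using x by (cases b) (simp_all add: eval_word_Cons)
  also have "\<dots> = pres_class A3 R3 ((transversal c @ [(g, b)]) @ winv (transversal ?d) @ transversal ?d @
      (w @ winv (transversal (coset_act_word ?d w))))"
    unfolding first Cons.IH[OF g(2)] using g by (simp add: mult_presented_group transversal_words)
  also have "\<dots> = pres_class A3 R3 ((transversal c @ [(g, b)]) @ (w @ winv (transversal (coset_act_word ?d w))))"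
    using g by (intro pres_class_cancel_middle) (auto simp: transversal_words)
  finally show ?case using x by simp
qed

lemma eval_rs_rewrite_relator:
  assumes r: "r \<in> R3"
  shows "eval_word PF schreier_elem (rs_rewrite c r) = \<one>\<^bsub>PF\<^esub>"
proof -
  have "eval_word PF schreier_elem (rs_rewrite c r)
      = pres_class A3 R3 (transversal c @ r @ winv (transversal c))"
    using eval_rs_rewrite[OF R3_words[OF r], of c] coset_act_word_relator[OF r] by simp
  also have "\<dots> = pres_class A3 R3 (transversal c @ winv (transversal c))"
    using pres_eq.relator[of "transversal c" A3 "winv (transversal c)" r R3] r R3_words[OF r]
    by (simp add: pres_class_eq_iff transversal_words)
  also have "\<dots> = pres_class A3 R3 []"
    using pres_eq_cancel_word[OF transversal_words[of c], of R3]
      by (simp add: pres_class_eq_iff transversal_words)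
  finally show ?thesis by (simp add: one_presented_group)
qed

section \<open>Each Schreier generator is recovered from its image in the target\<close>

lemma eval_subst_schreier_roundtrip:
  assumes "\<forall>x\<in>set u. schreier_elem (fst x) = eval_word PF schreier_elem (schreier_roundtrip (fst x))"
  shows "eval_word PF schreier_elem (subst_word schreier_roundtrip u) = eval_word PF schreier_elem u"
  using PF.eval_word_subst_word[where w = u and m = schreier_roundtrip and f = schreier_elem]
    eval_word_cong[of u "\<lambda>x. eval_word PF schreier_elem (schreier_roundtrip x)" schreier_elem PF] assms
  by simp

lemma (in group) inv_solve_middle:
  assumes "a \<in> carrier G" "x \<in> carrier G" "c \<in> carrier G" "a \<otimes> x \<otimes> c = \<one>"
  shows "x = inv a \<otimes> inv c"
proof -
  have "a \<otimes> (x \<otimes> c) = \<one>" using assms by (simp add: m_assoc)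
  then have "inv (x \<otimes> c) = a" using assms by (intro inv_equality) auto
  then have "x \<otimes> c = inv a" using assms by (metis inv_inv m_closed)
  then show ?thesis using assms by (metis inv_closed inv_solve_right)
qed

text \<open>An eliminated generator is solved for from a rewritten relator in which it occurs once,
  all other generators there being of lower rank.\<close>

lemma schreier_elem_roundtrip_eliminated:
  assumes step: "elim_step_check s c j k"
    and IH: "\<And>t. elim_rank t < elim_rank s \<Longrightarrow>
      schreier_elem t = eval_word PF schreier_elem (schreier_roundtrip t)"
  shows "schreier_elem s = eval_word PF schreier_elem (schreier_roundtrip s)"
proof -
  define w where "w = rs_rewrite c (fvb3_rel_list ! j)"
  define u where "u = take k w"
  define v where "v = drop (Suc k) w"
  let ?E = "eval_word PF schreier_elem"
  have j: "j < 7" and k: "k < length w" and wk: "fst (w ! k) = s"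
    and rank: "\<forall>x\<in>set (u @ v). elim_rank (fst x) < elim_rank s"
    and fr: "free_reduce (if snd (w ! k) then schreier_roundtrip s else winv (schreier_roundtrip s)) =
      free_reduce (winv (subst_word schreier_roundtrip u) @ winv (subst_word schreier_roundtrip v))"
    using step unfolding elim_step_check_def w_def u_def v_def list_all_iff Let_def by auto
  obtain b where b: "w ! k = (s, b)" using wk by (cases "w ! k") auto
  have w_split: "w = u @ [(s, b)] @ v"
    using id_take_nth_drop[OF k] b by (simp add: u_def v_def)
  have "?E w = \<one>\<^bsub>PF\<^esub>"
    unfolding w_def using j length_fvb3_rel_list by (intro eval_rs_rewrite_relator) (simp add: R3_eq)
  then have "?E u \<otimes>\<^bsub>PF\<^esub> ?E [(s, b)] \<otimes>\<^bsub>PF\<^esub> ?E v = \<one>\<^bsub>PF\<^esub>"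
    unfolding w_split using PF.eval_word_append[of schreier_elem "[(s, b)]" v]
    by (simp add: PF.eval_word_append PF.m_assoc)
  then have "?E [(s, b)] = inv\<^bsub>PF\<^esub> (?E u) \<otimes>\<^bsub>PF\<^esub> inv\<^bsub>PF\<^esub> (?E v)"
    by (intro PF.inv_solve_middle) auto
  also have "\<dots> = ?E (winv (subst_word schreier_roundtrip u) @ winv (subst_word schreier_roundtrip v))"
    using eval_subst_schreier_roundtrip[of u] eval_subst_schreier_roundtrip[of v] rank IH
    by (simp add: PF.eval_word_append PF.eval_word_winv)
  also have "\<dots> = ?E (if b then schreier_roundtrip s else winv (schreier_roundtrip s))"
    using PF.eval_word_free_reduce fr b by (metis letters_in_schreier_elem snd_conv)
  finally have "?E [(s, b)] = ?E (if b then schreier_roundtrip s else winv (schreier_roundtrip s))" .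
  then have "(if b then schreier_elem s else inv\<^bsub>PF\<^esub> (schreier_elem s)) =
      (if b then ?E (schreier_roundtrip s) else inv\<^bsub>PF\<^esub> (?E (schreier_roundtrip s)))"
    by (cases b) (simp_all add: eval_word_Cons PF.eval_word_winv)
  then show ?thesis using PF.inv_inj by (cases b) (auto dest: inj_onD)
qed

lemma schreier_elem_roundtrip: "schreier_elem s = eval_word PF schreier_elem (schreier_roundtrip s)"
proof (induction "elim_rank s" arbitrary: s rule: less_induct)
  case less
  obtain c h where s: "s = (c, h)" by fastforce
  have check: "schreier_index_check s" by (rule schreier_index_checked)
  show ?case
  proof (cases "elimination s")
    case Tree_edge
    let ?t = "transversal c @ [(gen_of_letter h, True)]"
    have tree: "schreier_to_target s = []" "transversal (coset_act c (gen_of_letter h)) = ?t"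
      using check s Tree_edge by (auto simp: schreier_index_check_def)
    have "schreier_elem s = pres_class A3 R3 (?t @ winv ?t)"
      using s tree by (simp add: schreier_elem_def schreier_word_def)
    also have "\<dots> = pres_class A3 R3 []"
      using pres_eq_cancel_word[of ?t A3 R3] by (simp add: pres_class_eq_iff transversal_words)
    finally show ?thesis using tree by (simp add: schreier_roundtrip_def one_presented_group)
  next
    case Kept
    then have "free_reduce (schreier_roundtrip s) = [(s, True)]"
      using check s by (auto simp: schreier_index_check_def)
    then show ?thesis using PF.eval_word_free_reduce[of schreier_elem "schreier_roundtrip s"]
      by (simp add: eval_word_Cons)
  next
    case (Eliminated r c' j k)
    then show ?thesis using check s less
      by (intro schreier_elem_roundtrip_eliminated[of s c' j k]) (auto simp: schreier_index_check_def)
  qed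
qed

lemma eval_subst_schreier_roundtrip_all:
  "eval_word PF schreier_elem (subst_word schreier_roundtrip w) = eval_word PF schreier_elem w"
  by (rule eval_subst_schreier_roundtrip) (simp add: schreier_elem_roundtrip[symmetric])

lemma eval_target_to_schreier_rs_target:
  "eval_word PF schreier_elem (subst_word target_to_schreier (rs_target c w))
      = eval_word PF schreier_elem (rs_rewrite c w)"
  by (simp add: rs_target_def subst_word_subst_word schreier_roundtrip_def[symmetric, abs_def]
      eval_subst_schreier_roundtrip_all)

section \<open>The inverse isomorphism\<close>

definition rs_inv_gen :: "tgt_gen \<Rightarrow> fvb_gen word set" where
  "rs_inv_gen a = eval_word PF schreier_elem (target_to_schreier a)"

definition rs_inv :: "tgt_gen word set \<Rightarrow> fvb_gen word set" where
  "rs_inv = pres_lift PF rs_inv_gen"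

lemma eval_rs_inv_gen: "eval_word PF rs_inv_gen v
    = eval_word PF schreier_elem (subst_word target_to_schreier v)"
  using PF.eval_word_subst_word[where w = v and m = target_to_schreier and f = schreier_elem]
    by (simp add: rs_inv_gen_def[abs_def])

lemma rs_inv_respects: "respects_relators PF rs_inv_gen AT RT"
  unfolding respects_relators_def
proof (intro conjI ballI impI)
  fix r assume "r \<in> RT"
  then obtain i where i: "i < 4" "r = tgt_rel_list ! i"
    using length_tgt_rel_list by (auto simp: RT_eq in_set_conv_nth)
  let ?cert = "map (\<lambda>(w, (c, j), s). (w, subst_word target_to_schreier (rs_target c (fvb3_rel_list ! j)), s))
    (cert_lookup target_relator_cert i)"
  have cert: "free_reduce (subst_word target_to_schreier r) = free_reduce (relator_product ?cert)"
    "list_all (\<lambda>(w, (c, j), s). j < 7) (cert_lookup target_relator_cert i)"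
    using target_relators_checked i unfolding target_relators_check_def list_all_iff by auto
  have "eval_word PF schreier_elem (subst_word target_to_schreier r) = \<one>\<^bsub>PF\<^esub>"
  proof (rule PF.eval_word_trivial_by_certificate[OF _ _ cert(1)])
    show "\<forall>(c, r, s)\<in>set ?cert. letters_in PF schreier_elem c \<and> letters_in PF schreier_elem r \<and>
        eval_word PF schreier_elem r = \<one>\<^bsub>PF\<^esub>"
    proof clarsimp
      fix w c j s assume "(w, (c, j), s) \<in> set (cert_lookup target_relator_cert i)"
      then have "fvb3_rel_list ! j \<in> R3"
        using cert(2) length_fvb3_rel_list by (auto simp: list_all_iff R3_eq)
      then show "eval_word PF schreier_elem (subst_word target_to_schreier (rs_target c (fvb3_rel_list ! j))) = \<one>\<^bsub>PF\<^esub>"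
        by (simp add: eval_target_to_schreier_rs_target eval_rs_rewrite_relator)
    qed
  qed simp
  then show "eval_word PF rs_inv_gen r = \<one>\<^bsub>PF\<^esub>" by (simp add: eval_rs_inv_gen)
qed (simp add: rs_inv_gen_def)

lemma rs_inv_pres_class: "v \<in> words AT \<Longrightarrow> rs_inv (pres_class AT RT v) = eval_word PF rs_inv_gen v"
  unfolding rs_inv_def by (rule PF.pres_lift_pres_class[OF rs_inv_respects])

lemma rs_inv_X3: "y \<in> carrier PT \<Longrightarrow> rs_inv y \<in> X3"
proof -
  assume "y \<in> carrier PT"
  then obtain v where v: "v \<in> words AT" "y = pres_class AT RT v" by (auto simp: carrier_presented_group)
  have "rs_inv_gen a \<in> X3" for a
    unfolding rs_inv_gen_def by (rule PF.eval_word_in_subgroup[OF subgroup_X3]) (simp add: schreier_elem_X3)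
  then have "eval_word PF rs_inv_gen v \<in> X3"
    by (intro PF.eval_word_in_subgroup[OF subgroup_X3]) simp
  then show ?thesis using v rs_inv_pres_class by simp
qed

lemma rs_inv_rs_hom: "x \<in> X3 \<Longrightarrow> rs_inv (rs_hom x) = x"
proof -
  assume "x \<in> X3"
  then obtain w where w: "w \<in> words A3" "x = pres_class A3 R3 w" "coset_act_word (E0, E0) w = (E0, E0)"
    by (auto simp: X3_def)
  have "rs_inv (rs_hom x) = eval_word PF rs_inv_gen (rs_target (E0, E0) w)"
    using w by (simp add: rs_hom_pres_class rs_inv_pres_class rs_target_words)
  also have "\<dots> = eval_word PF schreier_elem (rs_rewrite (E0, E0) w)"
    by (simp add: eval_rs_inv_gen eval_target_to_schreier_rs_target)
  also have "\<dots> = x" using eval_rs_rewrite[OF w(1), of "(E0, E0)"] w by (simp add: transversal_E0)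
  finally show ?thesis .
qed

lemma rs_target_subst_schreier_word:
  "rs_target (E0, E0) (subst_word schreier_word r) = subst_word schreier_to_target r \<and>
   coset_act_word (E0, E0) (subst_word schreier_word r) = (E0, E0)"
proof (induction r)
  case Nil then show ?case by (simp add: rs_target_def)
next
  case (Cons x r)
  obtain c h b where x: "x = ((c, h), b)" by (metis surj_pair)
  let ?d = "coset_act c (gen_of_letter h)"
  have "rs_target (E0, E0) (schreier_word (c, h)) = schreier_to_target (c, h)"
    using rs_target_transversal[of c] rs_target_winv_transversal[of ?d] coset_act_transversal[of c]
    by (simp add: schreier_word_def rs_target_def)
  moreover have "rs_target (E0, E0) (winv (schreier_word (c, h))) = winv (schreier_to_target (c, h))"
    using rs_target_transversal[of ?d] rs_target_winv_transversal[of c] coset_act_transversal[of ?d]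
    by (simp add: schreier_word_def rs_target_def)
  moreover have "coset_act_word (E0, E0) (winv (schreier_word (c, h))) = (E0, E0)"
    using coset_act_word_winv[of "(E0, E0)" "schreier_word (c, h)"] coset_act_schreier_word by simp
  ultimately show ?case using Cons x coset_act_schreier_word by (cases b) simp_all
qed

lemma target_gen_roundtrip:
  assumes a: "a \<in> AT"
  shows "pres_eq AT RT (subst_word schreier_to_target (target_to_schreier a)) [(a, True)]"
proof (rule pres_eq_of_trivial_quotient)
  have "certifies is_tgt_word tgt_rel_list (cert_lookup target_gen_cert a)
      (subst_word schreier_to_target (target_to_schreier a) @ [(a, False)])"
    using target_gens_checked a unfolding target_gens_check_def list_all_iff by (simp add: AT_eq)
  then show "pres_eq AT RT (subst_word schreier_to_target (target_to_schreier a) @ winv [(a, True)]) []"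
    by (simp, rule pres_eq_trivial_if_certifies)
       (use a in \<open>auto simp: is_tgt_word_iff RT_eq tgt_rel_list_words subst_schreier_to_target_words\<close>)
qed (use a subst_schreier_to_target_words in auto)

lemma rs_hom_rs_inv: "y \<in> carrier PT \<Longrightarrow> rs_hom (rs_inv y) = y"
proof -
  assume "y \<in> carrier PT"
  then obtain v where v: "v \<in> words AT" "y = pres_class AT RT v" by (auto simp: carrier_presented_group)
  have sw: "subst_word schreier_word (subst_word target_to_schreier v) \<in> words A3"
    by (rule subst_word_words) (simp add: schreier_word_words)
  have "rs_inv y = eval_word PF schreier_elem (subst_word target_to_schreier v)"
    using v by (simp add: rs_inv_pres_class eval_rs_inv_gen)
  also have "\<dots> = pres_class A3 R3 (subst_word schreier_word (subst_word target_to_schreier v))"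
    unfolding schreier_elem_def[abs_def]
      by (rule eval_word_pres_class_subst) (simp add: schreier_word_words)
  finally have "rs_hom (rs_inv y)
      = pres_class AT RT (subst_word schreier_to_target (subst_word target_to_schreier v))"
    using rs_hom_pres_class[OF sw] rs_target_subst_schreier_word by simp
  also have "\<dots> = eval_word PT (\<lambda>a. pres_class AT RT (subst_word schreier_to_target (target_to_schreier a))) v"
    by (simp add: subst_word_subst_word eval_word_pres_class_subst subst_schreier_to_target_words)
  also have "\<dots> = eval_word PT (\<lambda>a. pres_class AT RT (gen a)) v"
  proof (rule eval_word_cong)
    fix x assume "x \<in> set v"
    then have "fst x \<in> AT" using v(1) by (auto simp: words_def)
    then show "pres_class AT RT (subst_word schreier_to_target (target_to_schreier (fst x)))
        = pres_class AT RT (gen (fst x))"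
      using target_gen_roundtrip subst_schreier_to_target_words by (simp add: pres_class_eq_iff gen_def)
  qed
  also have "\<dots> = y" using v by (simp add: eval_word_pres_class_gen)
  finally show ?thesis .
qed

lemma rs_hom_iso: "rs_hom \<in> iso (PF\<lparr>carrier := X3\<rparr>) PT"
proof (rule isoI[OF rs_hom_hom])
  have "inj_on rs_hom X3" by (metis inj_onI rs_inv_rs_hom)
  moreover have "rs_hom ` X3 = carrier PT"
    using hom_carrier[OF rs_hom_hom] rs_hom_rs_inv rs_inv_X3 by force
  ultimately show "bij_betw rs_hom (carrier (PF\<lparr>carrier := X3\<rparr>)) (carrier PT)"
    by (simp add: bij_betw_def)
qed

theorem mainTheorem3:
  shows "(FVB 3)\<lparr>carrier := FVP 3 \<inter> FVK 3\<rparr> \<cong> Z2_F3_Gamma"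
  using is_isoI[OF rs_hom_iso] by (simp add: FVP_Int_FVK_eq_X3 FVB_def Z2_F3_Gamma_def)

end
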